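(* Let $A$ be an integral domain (commutative with unit) and let $T$ be the theory of algebraically closed fields in the language $\langle +,-,\times,0,1\rangle$. The following are equivalent: (1) $A$ is an algebraically closed field; (2) for every $n\in\mathbb N$ and every finitely generated ideal $I$ of $A[X_1,\dots,X_n]$, $\mathscr I(\mathscr Z_A(I))=\sqrt I$; (3) for every $n\in\mathbb N$ and every finitely generated ideal $I$ of $A[X_1,\dots,X_n]$, $\mathscr I(\mathscr Z_A(I))=\sqrt[T]{I}$.
   Context: $\mathscr Z_A(I)=\{\bar a\in A^n: P(\bar a)=0 \text{ for all } P\in I\}$; for $S\subseteq A^n$, $\mathscr I(S)=\{P\in A[X_1,\dots,X_n]:P(\bar a)=0\text{ for all }\bar a\in S\}$; $\sqrt I$ is the usual radical of $I$. The $T$-radical $\sqrt[T]{I}$ is the intersection of all ideals $J$ of $A[X_1,\dots,X_n]$ with $I\subseteq J$, $A[X_1,\dots,X_n]/J$ a model of $T_\forall$ (the universal consequences of $T$, i.e. an integral domain), and $J\cap A=(0)$ (where $A$ is identified with the constant polynomials). *)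

theory Defs
  imports "HOL-Library.Poly_Mapping" "HOL-Computational_Algebra.Polynomial"
begin

text \<open>Multivariate polynomials over a commutative ring: the monoid algebra
  over monomials (nat \<Rightarrow>0 nat), variables indexed by nat.
  A[X_1,...,X_n] is the subring of polynomials using only variables 0..n-1.\<close>

type_synonym 'a mpoly = "(nat \<Rightarrow>\<^sub>0 nat) \<Rightarrow>\<^sub>0 'a"

definition polys :: "nat \<Rightarrow> ('a::comm_ring_1) mpoly set" where
  "polys n = {p. \<forall>m \<in> Poly_Mapping.keys p. \<forall>i \<in> Poly_Mapping.keys m. i < n}"

definition const_poly :: "'a::comm_ring_1 \<Rightarrow> 'a mpoly" where
  "const_poly c = Poly_Mapping.single 0 c"

definition eval_mpoly :: "(nat \<Rightarrow> 'a::comm_ring_1) \<Rightarrow> 'a mpoly \<Rightarrow> 'a" where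
  "eval_mpoly a p = (\<Sum>m \<in> Poly_Mapping.keys p. Poly_Mapping.lookup p m * (\<Prod>i \<in> Poly_Mapping.keys m. a i ^ Poly_Mapping.lookup m i))"

text \<open>The points of A^n, represented as functions nat \<Rightarrow> A vanishing from index n on.\<close>
definition points :: "nat \<Rightarrow> (nat \<Rightarrow> 'a::comm_ring_1) set" where
  "points n = {a. \<forall>i\<ge>n. a i = 0}"

definition is_ideal :: "nat \<Rightarrow> ('a::comm_ring_1) mpoly set \<Rightarrow> bool" where
  "is_ideal n J \<longleftrightarrow> J \<subseteq> polys n \<and> 0 \<in> J \<and>
     (\<forall>p\<in>J. \<forall>q\<in>J. p - q \<in> J) \<and> (\<forall>p\<in>polys n. \<forall>q\<in>J. p * q \<in> J)"

definition gen_ideal :: "nat \<Rightarrow> ('a::comm_ring_1) mpoly list \<Rightarrow> 'a mpoly set" where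
  "gen_ideal n gs = {(\<Sum>i<length gs. qs ! i * gs ! i) | qs.
       length qs = length gs \<and> set qs \<subseteq> polys n}"

definition fin_gen_ideal :: "nat \<Rightarrow> ('a::comm_ring_1) mpoly set \<Rightarrow> bool" where
  "fin_gen_ideal n I \<longleftrightarrow> (\<exists>gs. set gs \<subseteq> polys n \<and> I = gen_ideal n gs)"

definition zero_set :: "nat \<Rightarrow> ('a::comm_ring_1) mpoly set \<Rightarrow> (nat \<Rightarrow> 'a) set" where
  "zero_set n I = {a \<in> points n. \<forall>p\<in>I. eval_mpoly a p = 0}"

definition vanishing_ideal :: "nat \<Rightarrow> (nat \<Rightarrow> 'a::comm_ring_1) set \<Rightarrow> 'a mpoly set" where
  "vanishing_ideal n S = {p \<in> polys n. \<forall>a\<in>S. eval_mpoly a p = 0}"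

definition radical :: "nat \<Rightarrow> ('a::comm_ring_1) mpoly set \<Rightarrow> 'a mpoly set" where
  "radical n I = {p \<in> polys n. \<exists>k. p ^ k \<in> I}"

text \<open>A[X]/J is a model of T_\<forall> (T = ACF), i.e. an integral domain:
  J is a proper ideal and the quotient has no zero divisors.\<close>
definition quotient_is_domain :: "nat \<Rightarrow> ('a::comm_ring_1) mpoly set \<Rightarrow> bool" where
  "quotient_is_domain n J \<longleftrightarrow> J \<noteq> polys n \<and>
     (\<forall>p\<in>polys n. \<forall>q\<in>polys n. p * q \<in> J \<longrightarrow> p \<in> J \<or> q \<in> J)"

definition T_radical :: "nat \<Rightarrow> ('a::comm_ring_1) mpoly set \<Rightarrow> 'a mpoly set" where
  "T_radical n I = {p \<in> polys n. \<forall>J. is_ideal n J \<and> I \<subseteq> J \<and> quotient_is_domain n J \<and>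
       (\<forall>c. const_poly c \<in> J \<longrightarrow> c = 0) \<longrightarrow> p \<in> J}"

definition alg_closed_field :: "'a::idom itself \<Rightarrow> bool" where
  "alg_closed_field _ \<longleftrightarrow> (\<forall>x::'a. x \<noteq> 0 \<longrightarrow> (\<exists>y. x * y = 1)) \<and>
     (\<forall>p::'a poly. degree p > 0 \<longrightarrow> (\<exists>x. poly p x = 0))"

end

theory Submission
  imports Defs "HOL-Computational_Algebra.Polynomial_Factorial"
begin

text \<open>If \<open>A\<close> is algebraically closed, the weak Nullstellensatz is proved by induction on the
  number of variables: after Nagata's substitution \<open>X\<^sub>i \<mapsto> X\<^sub>i + X\<^sub>n\<^bsup>e\<^sub>i\<^esup>\<close> a proper ideal contains a
  polynomial monic in \<open>X\<^sub>n\<close>, and then a Nakayama argument over \<open>A[X\<^sub>0,\<dots>,X\<^sub>n\<^sub>-\<^sub>1]\<close> shows that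
  every zero of the contracted ideal extends to a zero of the whole ideal. Rabinowitsch's
  trick turns this into \<open>\<I>(\<Z>(I)) = \<surd>I\<close>; moreover \<open>\<surd>I\<close> lies in the \<open>T\<close>-radical, which in turn
  lies in \<open>\<I>(\<Z>(I))\<close> because evaluation at a point has a prime kernel meeting \<open>A\<close> trivially.

  If \<open>A\<close> is not algebraically closed, some nonconstant \<open>q \<in> A[X]\<close> has no root (\<open>a X - 1\<close> for a
  non-unit \<open>a\<close> if \<open>A\<close> is not a field). Then \<open>\<Z>((q)) = \<emptyset>\<close>, so \<open>1 \<in> \<I>(\<Z>((q)))\<close>, whereas a prime
  factor of \<open>q\<close> over \<open>Frac(A)\<close> gives a prime ideal containing \<open>q\<close> and no nonzero constant,
  so \<open>1\<close> is neither in the \<open>T\<close>-radical nor in \<open>\<surd>(q)\<close>.\<close>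

abbreviation (input) keys where "keys \<equiv> Poly_Mapping.keys"
abbreviation (input) lookup where "lookup \<equiv> Poly_Mapping.lookup"

locale comm_ring_hom =
  fixes hom :: "'a::comm_ring_1 \<Rightarrow> 'b::comm_ring_1"
  assumes hom_one: "hom 1 = 1"
    and hom_add: "hom (x + y) = hom x + hom y"
    and hom_mult: "hom (x * y) = hom x * hom y"
begin

lemma hom_zero: "hom 0 = 0"
  using hom_add[of 0 0] by simp

lemma hom_uminus: "hom (- x) = - hom x"
  using hom_add[of x "- x"] hom_zero by (simp add: add_eq_0_iff)

lemma hom_diff: "hom (x - y) = hom x - hom y"
  using hom_add[of x "- y"] hom_uminus[of y] by simp

lemma hom_sum: "hom (sum f S) = (\<Sum>x\<in>S. hom (f x))"
  by (induction S rule: infinite_finite_induct) (auto simp: hom_zero hom_add)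

lemma hom_prod: "hom (prod f S) = (\<Prod>x\<in>S. hom (f x))"
  by (induction S rule: infinite_finite_induct) (auto simp: hom_one hom_mult)

lemma hom_power: "hom (x ^ k) = hom x ^ k"
  by (induction k) (auto simp: hom_one hom_mult)

lemma hom_poly: "hom (poly P x) = poly (map_poly hom P) (hom x)"
  by (induction P) (simp_all add: map_poly_pCons hom_zero hom_add hom_mult)

end

lemma comm_ring_hom_id: "comm_ring_hom (\<lambda>x. x)"
  by unfold_locales auto

lemma comm_ring_hom_comp:
  "comm_ring_hom h \<Longrightarrow> comm_ring_hom k \<Longrightarrow> comm_ring_hom (\<lambda>x. k (h x))"
  by (unfold_locales) (simp_all add: comm_ring_hom.hom_one comm_ring_hom.hom_add comm_ring_hom.hom_mult)

lemma comm_ring_hom_const_poly_1: "comm_ring_hom (\<lambda>c. [:c:])"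
  by unfold_locales (auto simp: one_pCons)

lemma comm_ring_hom_poly: "comm_ring_hom (\<lambda>P. poly P x)"
  by unfold_locales simp_all

lemma comm_ring_hom_map_poly: "comm_ring_hom h \<Longrightarrow> comm_ring_hom (map_poly h)"
  by unfold_locales (rule poly_eqI; simp add: coeff_map_poly coeff_mult comm_ring_hom.hom_zero
      comm_ring_hom.hom_one comm_ring_hom.hom_add comm_ring_hom.hom_mult comm_ring_hom.hom_sum)+

lemma comm_ring_hom_to_fract: "comm_ring_hom to_fract"
  by unfold_locales simp_all

lemma poly_map_const_poly_X: "poly (map_poly (\<lambda>c. [:c:]) k) [:0, 1:] = (k :: 'a::comm_ring_1 poly)"
proof (induction k)
  case (pCons c k)
  then show ?case by (simp add: map_poly_pCons mult_pCons_left)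
qed simp

lemma poly_mapping_sum_single:
  "(f :: 'x \<Rightarrow>\<^sub>0 'y::comm_monoid_add) = (\<Sum>k\<in>keys f. Poly_Mapping.single k (lookup f k))"
proof (rule poly_mapping_eqI)
  fix j
  have "lookup (\<Sum>k\<in>keys f. Poly_Mapping.single k (lookup f k)) j
      = (\<Sum>k\<in>keys f. if k = j then lookup f k else 0)"
    by (simp add: lookup_sum lookup_single when_def)
  also have "\<dots> = lookup f j" by (auto simp: in_keys_iff)
  finally show "lookup f j = lookup (\<Sum>k\<in>keys f. Poly_Mapping.single k (lookup f k)) j"
    by simp
qed


definition Var :: "nat \<Rightarrow> 'a::comm_ring_1 mpoly" where
  "Var i = Poly_Mapping.single (Poly_Mapping.single i 1) 1"

definition eval_monom :: "(nat \<Rightarrow> 'b::comm_ring_1) \<Rightarrow> (nat \<Rightarrow>\<^sub>0 nat) \<Rightarrow> 'b" where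
  "eval_monom b m = (\<Prod>i\<in>keys m. b i ^ lookup m i)"

definition eval_hom :: "('a::comm_ring_1 \<Rightarrow> 'b::comm_ring_1) \<Rightarrow> (nat \<Rightarrow> 'b) \<Rightarrow> 'a mpoly \<Rightarrow> 'b" where
  "eval_hom h b p = (\<Sum>m\<in>keys p. h (lookup p m) * eval_monom b m)"

lemma eval_monom_superset:
  "finite S \<Longrightarrow> keys m \<subseteq> S \<Longrightarrow> eval_monom b m = (\<Prod>i\<in>S. b i ^ lookup m i)"
  unfolding eval_monom_def by (rule prod.mono_neutral_left) (auto simp: in_keys_iff)

lemma eval_monom_add: "eval_monom b (m + m') = eval_monom b m * eval_monom b m'"
proof -
  let ?S = "keys m \<union> keys m'"
  have "eval_monom b (m + m') = (\<Prod>i\<in>?S. b i ^ lookup (m + m') i)"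
    by (rule eval_monom_superset) (auto simp: keys_add)
  also have "\<dots> = (\<Prod>i\<in>?S. b i ^ lookup m i) * (\<Prod>i\<in>?S. b i ^ lookup m' i)"
    by (simp add: lookup_add power_add prod.distrib)
  also have "\<dots> = eval_monom b m * eval_monom b m'"
    using eval_monom_superset[of ?S m b] eval_monom_superset[of ?S m' b] by simp
  finally show ?thesis .
qed

lemma eval_monom_0 [simp]: "eval_monom b 0 = 1"
  by (simp add: eval_monom_def)

lemma eval_monom_single: "eval_monom b (Poly_Mapping.single i k) = b i ^ k"
  by (simp add: eval_monom_def)

context comm_ring_hom
begin

lemma eval_hom_superset:
  "finite S \<Longrightarrow> keys p \<subseteq> S \<Longrightarrow> eval_hom hom b p = (\<Sum>m\<in>S. hom (lookup p m) * eval_monom b m)"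
  unfolding eval_hom_def by (rule sum.mono_neutral_left) (auto simp: in_keys_iff hom_zero)

lemma eval_hom_add: "eval_hom hom b (p + q) = eval_hom hom b p + eval_hom hom b q"
proof -
  let ?S = "keys p \<union> keys q"
  have "eval_hom hom b (p + q) = (\<Sum>m\<in>?S. hom (lookup (p + q) m) * eval_monom b m)"
    by (rule eval_hom_superset) (auto simp: keys_add)
  also have "\<dots> = (\<Sum>m\<in>?S. hom (lookup p m) * eval_monom b m) + (\<Sum>m\<in>?S. hom (lookup q m) * eval_monom b m)"
    by (simp add: lookup_add hom_add distrib_right sum.distrib)
  also have "\<dots> = eval_hom hom b p + eval_hom hom b q"
    using eval_hom_superset[of ?S p b] eval_hom_superset[of ?S q b] by simp
  finally show ?thesis .
qed

lemma eval_hom_0 [simp]: "eval_hom hom b 0 = 0"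
  by (simp add: eval_hom_def)

lemma eval_hom_sum: "eval_hom hom b (sum f S) = (\<Sum>x\<in>S. eval_hom hom b (f x))"
  by (induction S rule: infinite_finite_induct) (auto simp: eval_hom_add)

lemma eval_hom_single: "eval_hom hom b (Poly_Mapping.single m c) = hom c * eval_monom b m"
  by (simp add: eval_hom_def hom_zero)

lemma eval_hom_mult: "eval_hom hom b (p * q) = eval_hom hom b p * eval_hom hom b q"
proof -
  have "p * q = (\<Sum>m\<in>keys p. Poly_Mapping.single m (lookup p m)) * (\<Sum>m'\<in>keys q. Poly_Mapping.single m' (lookup q m'))"
    by (metis poly_mapping_sum_single)
  also have "\<dots> = (\<Sum>m\<in>keys p. \<Sum>m'\<in>keys q. Poly_Mapping.single (m + m') (lookup p m * lookup q m'))"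
    by (simp add: sum_product mult_single)
  finally have "eval_hom hom b (p * q) = (\<Sum>m\<in>keys p. \<Sum>m'\<in>keys q.
      (hom (lookup p m) * eval_monom b m) * (hom (lookup q m') * eval_monom b m'))"
    by (simp add: eval_hom_sum eval_hom_single hom_mult eval_monom_add mult_ac)
  also have "\<dots> = eval_hom hom b p * eval_hom hom b q"
    by (simp add: eval_hom_def sum_product)
  finally show ?thesis .
qed

lemma comm_ring_hom_eval_hom: "comm_ring_hom (eval_hom hom b)"
proof
  show "eval_hom hom b 1 = 1"
    using eval_hom_single[where m=0 and c=1] by (simp add: hom_one)
qed (simp_all add: eval_hom_add eval_hom_mult)

lemma eval_hom_const [simp]: "eval_hom hom b (const_poly c) = hom c"
  by (simp add: const_poly_def eval_hom_single)

lemma eval_hom_Var [simp]: "eval_hom hom b (Var i) = b i"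
  by (simp add: Var_def eval_hom_single eval_monom_single hom_one)

lemma hom_eval_hom:
  assumes "comm_ring_hom k"
  shows "k (eval_hom hom b p) = eval_hom (\<lambda>c. k (hom c)) (\<lambda>i. k (b i)) p"
  unfolding eval_hom_def eval_monom_def
  by (simp add: comm_ring_hom.hom_sum[OF assms] comm_ring_hom.hom_mult[OF assms]
      comm_ring_hom.hom_prod[OF assms] comm_ring_hom.hom_power[OF assms])

lemma eval_hom_cong:
  assumes "p \<in> polys n" "\<And>i. i < n \<Longrightarrow> b i = b' i"
  shows "eval_hom hom b p = eval_hom hom b' p"
  unfolding eval_hom_def eval_monom_def using assms unfolding polys_def
  by (intro sum.cong refl arg_cong2[where f="(*)"] prod.cong) auto

end

lemma eval_mpoly_eq_eval_hom: "eval_mpoly a = eval_hom (\<lambda>x. x) a"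
  by (simp add: fun_eq_iff eval_mpoly_def eval_hom_def eval_monom_def)

lemma comm_ring_hom_const_poly: "comm_ring_hom const_poly"
  by unfold_locales (simp_all add: const_poly_def single_add mult_single)

lemma Var_power: "(Var i :: 'a::comm_ring_1 mpoly) ^ k = Poly_Mapping.single (Poly_Mapping.single i k) 1"
  by (induction k) (simp_all add: Var_def mult_single single_add[symmetric] mult.commute)

lemma prod_single_1:
  "finite S \<Longrightarrow> (\<Prod>i\<in>S. Poly_Mapping.single (f i) (1::'a::comm_ring_1)) = Poly_Mapping.single (\<Sum>i\<in>S. f i) 1"
  by (induction S rule: finite_induct) (simp_all add: mult_single)

lemma eval_monom_Var: "eval_monom Var m = (Poly_Mapping.single m 1 :: 'a::comm_ring_1 mpoly)"
proof -
  have "eval_monom Var m = (\<Prod>i\<in>keys m. Poly_Mapping.single (Poly_Mapping.single i (lookup m i)) (1::'a))"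
    by (simp add: eval_monom_def Var_power)
  also have "\<dots> = Poly_Mapping.single (\<Sum>i\<in>keys m. Poly_Mapping.single i (lookup m i)) 1"
    using prod_single_1[of "keys m" "\<lambda>i. Poly_Mapping.single i (lookup m i)"] by simp
  also have "\<dots> = Poly_Mapping.single m 1"
    by (metis poly_mapping_sum_single)
  finally show ?thesis .
qed

lemma eval_hom_const_poly_Var [simp]: "eval_hom const_poly Var p = (p :: 'a::comm_ring_1 mpoly)"
proof -
  have "eval_hom const_poly Var p = (\<Sum>m\<in>keys p. Poly_Mapping.single m (lookup p m))"
    unfolding eval_hom_def eval_monom_Var const_poly_def by (simp add: mult_single)
  then show ?thesis by (metis poly_mapping_sum_single)
qed


lemma polys_memI: "(\<And>m i. m \<in> keys p \<Longrightarrow> i \<in> keys m \<Longrightarrow> i < n) \<Longrightarrow> p \<in> polys n"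
  unfolding polys_def by blast

lemma polys_memD: "p \<in> polys n \<Longrightarrow> m \<in> keys p \<Longrightarrow> i \<in> keys m \<Longrightarrow> i < n"
  unfolding polys_def by blast

lemma polys_zero [simp]: "0 \<in> polys n"
  and polys_one [simp]: "1 \<in> polys n"
  and polys_const [simp]: "const_poly c \<in> polys n"
  by (simp_all add: polys_def const_poly_def)

lemma polys_Var: "i < n \<Longrightarrow> Var i \<in> polys n"
  by (simp add: polys_def Var_def)

lemma polys_add: "p \<in> polys n \<Longrightarrow> q \<in> polys n \<Longrightarrow> p + q \<in> polys n"
  unfolding polys_def using keys_add[of p q] by blast

lemma polys_uminus: "p \<in> polys n \<Longrightarrow> - p \<in> polys n"
  unfolding polys_def by (simp add: keys_minus)

lemma polys_diff: "p \<in> polys n \<Longrightarrow> q \<in> polys n \<Longrightarrow> p - q \<in> polys n"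
  using polys_add[of p n "- q"] polys_uminus[of q n] by simp

lemma polys_mult: "p \<in> polys n \<Longrightarrow> q \<in> polys n \<Longrightarrow> p * q \<in> polys n"
proof (rule polys_memI)
  fix m i assume p: "p \<in> polys n" and q: "q \<in> polys n" and m: "m \<in> keys (p * q)" and i: "i \<in> keys m"
  from m keys_mult obtain a b where ab: "m = a + b" "a \<in> keys p" "b \<in> keys q" by blast
  with i keys_add[of a b] have "i \<in> keys a \<or> i \<in> keys b" by blast
  then show "i < n" using p q ab polys_memD by metis
qed

lemma polys_sum: "(\<And>x. x \<in> S \<Longrightarrow> f x \<in> polys n) \<Longrightarrow> sum f S \<in> polys n"
  by (induction S rule: infinite_finite_induct) (auto intro: polys_add)

lemma polys_prod: "(\<And>x. x \<in> S \<Longrightarrow> f x \<in> polys n) \<Longrightarrow> prod f S \<in> polys n"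
  by (induction S rule: infinite_finite_induct) (auto intro: polys_mult)

lemma polys_power: "p \<in> polys n \<Longrightarrow> p ^ k \<in> polys n"
  by (induction k) (auto intro: polys_mult)

lemma polys_mono: "n \<le> N \<Longrightarrow> p \<in> polys n \<Longrightarrow> p \<in> polys N"
  unfolding polys_def by fastforce

lemma polys_Suc: "p \<in> polys n \<Longrightarrow> p \<in> polys (Suc n)"
  by (rule polys_mono[of n]) auto

lemma polys_0_eq_const:
  assumes "p \<in> polys 0"
  shows "p = const_poly (lookup p 0)"
proof (rule poly_mapping_eqI)
  fix k :: "nat \<Rightarrow>\<^sub>0 nat"
  show "lookup p k = lookup (const_poly (lookup p 0)) k"
  proof (cases "k = 0")
    case False
    then obtain i where "i \<in> keys k"
      by (metis all_not_in_conv keys_eq_empty)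
    then have "k \<notin> keys p"
      using polys_memD[OF assms] by blast
    then show ?thesis
      using False by (simp add: const_poly_def in_keys_iff lookup_single)
  qed (simp add: const_poly_def)
qed

lemma eval_hom_polys:
  assumes "p \<in> polys n" "\<And>i. i < n \<Longrightarrow> b i \<in> polys N"
  shows "eval_hom const_poly b p \<in> polys N"
  unfolding eval_hom_def eval_monom_def using assms polys_memD[OF assms(1)]
  by (intro polys_sum polys_mult polys_const polys_prod polys_power) auto

lemma comm_ring_hom_eval_mpoly: "comm_ring_hom (eval_mpoly a)"
  by (simp add: eval_mpoly_eq_eval_hom comm_ring_hom.comm_ring_hom_eval_hom comm_ring_hom_id)

lemma eval_mpoly_const [simp]: "eval_mpoly a (const_poly c) = c"
  and eval_mpoly_Var [simp]: "eval_mpoly a (Var i) = a i"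
  by (simp_all add: eval_mpoly_eq_eval_hom comm_ring_hom.eval_hom_const comm_ring_hom.eval_hom_Var
      comm_ring_hom_id)

lemma eval_mpoly_1 [simp]: "eval_mpoly a 1 = 1"
  and eval_mpoly_0 [simp]: "eval_mpoly a 0 = 0"
  and eval_mpoly_add [simp]: "eval_mpoly a (p + q) = eval_mpoly a p + eval_mpoly a q"
  and eval_mpoly_mult [simp]: "eval_mpoly a (p * q) = eval_mpoly a p * eval_mpoly a q"
  and eval_mpoly_diff [simp]: "eval_mpoly a (p - q) = eval_mpoly a p - eval_mpoly a q"
  and eval_mpoly_power [simp]: "eval_mpoly a (p ^ k) = eval_mpoly a p ^ k"
  and eval_mpoly_sum [simp]: "eval_mpoly a (sum f S) = (\<Sum>x\<in>S. eval_mpoly a (f x))"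
  using comm_ring_hom_eval_mpoly[of a]
  by (simp_all add: comm_ring_hom.hom_one comm_ring_hom.hom_zero comm_ring_hom.hom_add
      comm_ring_hom.hom_mult comm_ring_hom.hom_diff comm_ring_hom.hom_power comm_ring_hom.hom_sum)

lemma eval_mpoly_cong:
  "p \<in> polys n \<Longrightarrow> (\<And>i. i < n \<Longrightarrow> a i = a' i) \<Longrightarrow> eval_mpoly a p = eval_mpoly a' p"
  unfolding eval_mpoly_eq_eval_hom by (rule comm_ring_hom.eval_hom_cong[OF comm_ring_hom_id])

lemma const_poly_0 [simp]: "const_poly 0 = 0"
  and const_poly_1 [simp]: "const_poly 1 = 1"
  and const_poly_mult: "const_poly (a * b) = const_poly a * const_poly b"
  by (simp_all add: const_poly_def mult_single)

section \<open>Polynomials in the last variable\<close>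

text \<open>\<open>to_univ n\<close> views \<open>A[X\<^sub>0,\<dots>,X\<^sub>n]\<close> as \<open>A[X\<^sub>0,\<dots>,X\<^sub>n\<^sub>-\<^sub>1][X\<^sub>n]\<close>.\<close>
definition to_univ_Var :: "nat \<Rightarrow> nat \<Rightarrow> 'a::comm_ring_1 mpoly poly" where
  "to_univ_Var n i = (if i < n then [:Var i:] else if i = n then [:0, 1:] else 0)"

definition to_univ :: "nat \<Rightarrow> 'a::comm_ring_1 mpoly \<Rightarrow> 'a mpoly poly" where
  "to_univ n = eval_hom (\<lambda>c. [:const_poly c:]) (to_univ_Var n)"

lemma comm_ring_hom_const_to_univ: "comm_ring_hom (\<lambda>c. [:const_poly c:])"
  using comm_ring_hom_comp[OF comm_ring_hom_const_poly comm_ring_hom_const_poly_1] by simp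

lemma comm_ring_hom_to_univ: "comm_ring_hom (to_univ n)"
  unfolding to_univ_def by (rule comm_ring_hom.comm_ring_hom_eval_hom[OF comm_ring_hom_const_to_univ])

lemma to_univ_const [simp]: "to_univ n (const_poly c) = [:const_poly c:]"
  and to_univ_Var: "i < n \<Longrightarrow> to_univ n (Var i) = [:Var i:]"
  and to_univ_Var_last [simp]: "to_univ n (Var n) = [:0, 1:]"
  by (simp_all add: to_univ_def to_univ_Var_def comm_ring_hom.eval_hom_const
      comm_ring_hom.eval_hom_Var comm_ring_hom_const_to_univ)

definition coeffs_in :: "nat \<Rightarrow> 'a::comm_ring_1 mpoly poly \<Rightarrow> bool" where
  "coeffs_in n Q \<longleftrightarrow> (\<forall>k. coeff Q k \<in> polys n)"

lemma coeffs_in_1: "coeffs_in n 1"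
  by (simp add: coeffs_in_def coeff_1)

lemma coeffs_in_mult: "coeffs_in n P \<Longrightarrow> coeffs_in n Q \<Longrightarrow> coeffs_in n (P * Q)"
  unfolding coeffs_in_def coeff_mult by (auto intro!: polys_sum polys_mult)

lemma coeffs_in_sum: "(\<And>x. x \<in> S \<Longrightarrow> coeffs_in n (f x)) \<Longrightarrow> coeffs_in n (sum f S)"
  by (induction S rule: infinite_finite_induct) (auto simp: coeffs_in_def intro: polys_add)

lemma coeffs_in_prod: "(\<And>x. x \<in> S \<Longrightarrow> coeffs_in n (f x)) \<Longrightarrow> coeffs_in n (prod f S)"
  by (induction S rule: infinite_finite_induct) (auto intro: coeffs_in_mult coeffs_in_1)

lemma coeffs_in_power: "coeffs_in n P \<Longrightarrow> coeffs_in n (P ^ k)"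
  by (induction k) (auto intro: coeffs_in_mult coeffs_in_1)

lemma coeffs_in_const: "c \<in> polys n \<Longrightarrow> coeffs_in n [:c:]"
  by (simp add: coeffs_in_def coeff_pCons split: nat.splits)

lemma coeff_to_univ_polys:
  assumes "p \<in> polys (Suc n)"
  shows "coeff (to_univ n p) k \<in> polys n"
proof -
  have "coeffs_in n (to_univ n p)"
    unfolding to_univ_def eval_hom_def eval_monom_def using polys_memD[OF assms]
    by (intro coeffs_in_sum coeffs_in_mult coeffs_in_const coeffs_in_prod coeffs_in_power)
      (auto simp: to_univ_Var_def coeffs_in_def coeff_pCons polys_Var split: nat.splits)
  then show ?thesis
    by (simp add: coeffs_in_def)
qed

lemma poly_to_univ_Var_last:
  assumes "p \<in> polys (Suc n)"
  shows "poly (to_univ n p) (Var n) = p"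
proof -
  have "poly (to_univ n p) (Var n) = eval_hom const_poly (\<lambda>i. poly (to_univ_Var n i) (Var n)) p"
    unfolding to_univ_def
    by (simp add: comm_ring_hom.hom_eval_hom[OF comm_ring_hom_const_to_univ comm_ring_hom_poly])
  also have "\<dots> = eval_hom const_poly Var p"
    by (rule comm_ring_hom.eval_hom_cong[OF comm_ring_hom_const_poly assms])
      (auto simp: to_univ_Var_def less_Suc_eq)
  finally show ?thesis
    by simp
qed

lemma to_univ_polys:
  assumes "r \<in> polys n"
  shows "to_univ n r = [:r:]"
proof -
  have "to_univ n r = eval_hom (\<lambda>c. [:const_poly c:]) (\<lambda>i. [:Var i:]) r"
    unfolding to_univ_def
    by (rule comm_ring_hom.eval_hom_cong[OF comm_ring_hom_const_to_univ assms])
      (simp add: to_univ_Var_def)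
  also have "\<dots> = [:eval_hom const_poly Var r:]"
    by (rule comm_ring_hom.hom_eval_hom[OF comm_ring_hom_const_poly comm_ring_hom_const_poly_1, symmetric])
  finally show ?thesis
    by simp
qed

lemma polys_Suc_expansion:
  assumes "p \<in> polys (Suc n)" "degree (to_univ n p) \<le> N"
  shows "p = (\<Sum>k\<le>N. coeff (to_univ n p) k * Var n ^ k)"
proof -
  have "p = (\<Sum>k\<le>degree (to_univ n p). coeff (to_univ n p) k * Var n ^ k)"
    using poly_to_univ_Var_last[OF assms(1)] by (simp add: poly_altdef)
  also have "\<dots> = (\<Sum>k\<le>N. coeff (to_univ n p) k * Var n ^ k)"
    using assms(2) by (intro sum.mono_neutral_left) (auto simp: coeff_eq_0)
  finally show ?thesis .
qed

lemma map_poly_eval_mpoly_pCons [simp]: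
  "map_poly (eval_mpoly a) (pCons c p) = pCons (eval_mpoly a c) (map_poly (eval_mpoly a) p)"
  by (simp add: map_poly_pCons)

definition partial_eval :: "nat \<Rightarrow> (nat \<Rightarrow> 'a) \<Rightarrow> 'a::comm_ring_1 mpoly \<Rightarrow> 'a poly" where
  "partial_eval n a q = map_poly (eval_mpoly a) (to_univ n q)"

lemma comm_ring_hom_partial_eval: "comm_ring_hom (partial_eval n a)"
  unfolding partial_eval_def
  by (rule comm_ring_hom_comp[OF comm_ring_hom_to_univ comm_ring_hom_map_poly[OF comm_ring_hom_eval_mpoly]])

lemma coeff_partial_eval: "coeff (partial_eval n a q) k = eval_mpoly a (coeff (to_univ n q) k)"
  by (simp add: partial_eval_def coeff_map_poly)

lemma partial_eval_const [simp]: "partial_eval n a (const_poly c) = [:c:]"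
  and partial_eval_Var_last [simp]: "partial_eval n a (Var n) = [:0, 1:]"
  by (simp_all add: partial_eval_def)

lemma poly_partial_eval:
  assumes "q \<in> polys (Suc n)"
  shows "poly (partial_eval n a q) b = eval_mpoly (a(n := b)) q"
proof -
  have hom: "comm_ring_hom (\<lambda>P. poly (map_poly (eval_mpoly a) P) b)"
    by (rule comm_ring_hom_comp[OF comm_ring_hom_map_poly[OF comm_ring_hom_eval_mpoly] comm_ring_hom_poly])
  have "poly (partial_eval n a q) b =
      eval_hom (\<lambda>c. c) (\<lambda>i. poly (map_poly (eval_mpoly a) (to_univ_Var n i)) b) q"
    unfolding partial_eval_def to_univ_def
    by (simp add: comm_ring_hom.hom_eval_hom[OF comm_ring_hom_const_to_univ hom])
  also have "\<dots> = eval_hom (\<lambda>c. c) (a(n := b)) q"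
    by (rule comm_ring_hom.eval_hom_cong[OF comm_ring_hom_id assms])
      (auto simp: to_univ_Var_def less_Suc_eq)
  finally show ?thesis
    by (simp add: eval_mpoly_eq_eval_hom)
qed

definition of_univ :: "nat \<Rightarrow> 'a::comm_ring_1 poly \<Rightarrow> 'a mpoly" where
  "of_univ n k = poly (map_poly const_poly k) (Var n)"

lemma of_univ_polys: "of_univ n k \<in> polys (Suc n)"
  unfolding of_univ_def poly_altdef
  by (intro polys_sum polys_mult polys_power polys_Var) (auto simp: coeff_map_poly)

lemma partial_eval_of_univ: "partial_eval n a (of_univ n k) = k"
proof -
  have "partial_eval n a (of_univ n k) =
      poly (map_poly (partial_eval n a) (map_poly const_poly k)) (partial_eval n a (Var n))"
    unfolding of_univ_def by (rule comm_ring_hom.hom_poly[OF comm_ring_hom_partial_eval])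
  also have "map_poly (partial_eval n a) (map_poly const_poly k) = map_poly (\<lambda>c. [:c:]) k"
    by (subst map_poly_map_poly)
      (auto simp: comm_ring_hom.hom_zero[OF comm_ring_hom_partial_eval] o_def)
  finally show ?thesis
    by (simp add: poly_map_const_poly_X)
qed

context
  fixes n :: nat and I :: "'a::comm_ring_1 mpoly set"
  assumes I: "is_ideal n I"
begin

lemma is_ideal_subset: "I \<subseteq> polys n"
  and is_ideal_0: "0 \<in> I"
  and is_ideal_diff: "p \<in> I \<Longrightarrow> q \<in> I \<Longrightarrow> p - q \<in> I"
  and is_ideal_mult: "p \<in> polys n \<Longrightarrow> q \<in> I \<Longrightarrow> p * q \<in> I"
  using I by (simp_all add: is_ideal_def)

lemma is_ideal_add: "p \<in> I \<Longrightarrow> q \<in> I \<Longrightarrow> p + q \<in> I"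
  using is_ideal_diff[of p "- q"] is_ideal_diff[OF is_ideal_0, of q] by simp

end

lemma is_ideal_contraction:
  fixes I :: "'a::comm_ring_1 mpoly set"
  assumes "is_ideal (Suc n) I"
  shows "is_ideal n (I \<inter> polys n)"
  unfolding is_ideal_def
proof (intro conjI ballI)
  fix p q :: "'a mpoly" assume "p \<in> polys n" "q \<in> I \<inter> polys n"
  then show "p * q \<in> I \<inter> polys n"
    using is_ideal_mult[OF assms polys_Suc[of p n], of q] by (auto intro: polys_mult)
qed (use is_ideal_0[OF assms] is_ideal_diff[OF assms] in \<open>auto intro: polys_diff\<close>)

section \<open>A Nakayama argument\<close>

definition is_submodule :: "nat \<Rightarrow> 'a::comm_ring_1 mpoly set \<Rightarrow> bool" where
  "is_submodule n W \<longleftrightarrow> 0 \<in> W \<and> (\<forall>x\<in>W. \<forall>y\<in>W. x + y \<in> W) \<and> (\<forall>r\<in>polys n. \<forall>w\<in>W. r * w \<in> W)"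

lemma is_submodule_sum: "is_submodule n W \<Longrightarrow> (\<And>x. x \<in> S \<Longrightarrow> f x \<in> W) \<Longrightarrow> sum f S \<in> W"
  by (induction S rule: infinite_finite_induct) (auto simp: is_submodule_def)

lemma is_submodule_ideal: "is_ideal (Suc n) I \<Longrightarrow> is_submodule n I"
  unfolding is_submodule_def using is_ideal_0 is_ideal_add is_ideal_mult polys_Suc by blast

lemma is_submodule_add_cyclic:
  fixes m :: "'a::comm_ring_1 mpoly"
  assumes "is_submodule n W"
  shows "is_submodule n {w + c * m |w c. w \<in> W \<and> c \<in> polys n}"
  unfolding is_submodule_def
proof (intro conjI ballI)
  have "0 = 0 + 0 * m" "0 \<in> W"
    using assms by (simp_all add: is_submodule_def)
  then show "0 \<in> {w + c * m |w c. w \<in> W \<and> c \<in> polys n}"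
    using polys_zero by blast
next
  fix x y :: "'a mpoly" assume "x \<in> {w + c * m |w c. w \<in> W \<and> c \<in> polys n}" "y \<in> {w + c * m |w c. w \<in> W \<and> c \<in> polys n}"
  then obtain w1 c1 w2 c2 where "x = w1 + c1 * m" "y = w2 + c2 * m"
    "w1 \<in> W" "w2 \<in> W" "c1 \<in> polys n" "c2 \<in> polys n"
    by blast
  moreover have "x + y = (w1 + w2) + (c1 + c2) * m"
    using calculation by (simp add: algebra_simps)
  moreover have "w1 + w2 \<in> W" "c1 + c2 \<in> polys n"
    using calculation assms by (auto simp: is_submodule_def intro: polys_add)
  ultimately show "x + y \<in> {w + c * m |w c. w \<in> W \<and> c \<in> polys n}"
    by blast
next
  fix r y :: "'a mpoly" assume r: "r \<in> polys n" and "y \<in> {w + c * m |w c. w \<in> W \<and> c \<in> polys n}"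
  then obtain w c where "y = w + c * m" "w \<in> W" "c \<in> polys n"
    by blast
  moreover have "r * y = r * w + (r * c) * m"
    using calculation by (simp add: algebra_simps)
  moreover have "r * w \<in> W" "r * c \<in> polys n"
    using calculation assms r by (auto simp: is_submodule_def intro: polys_mult)
  ultimately show "r * y \<in> {w + c * m |w c. w \<in> W \<and> c \<in> polys n}"
    by blast
qed

lemma add_cyclic_subset:
  assumes "W \<subseteq> polys (Suc n)" "m \<in> polys (Suc n)"
  shows "{w + c * m |w c. w \<in> W \<and> c \<in> polys n} \<subseteq> polys (Suc n)"
    and "W \<subseteq> {w + c * m |w c. w \<in> W \<and> c \<in> polys n}"
proof
  fix x assume "x \<in> {w + c * m |w c. w \<in> W \<and> c \<in> polys n}"
  then obtain w c where "x = w + c * m" "w \<in> W" "c \<in> polys n"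
    by blast
  then show "x \<in> polys (Suc n)"
    using assms polys_Suc[of c n] by (auto intro!: polys_add polys_mult)
next
  show "W \<subseteq> {w + c * m |w c. w \<in> W \<and> c \<in> polys n}"
  proof
    fix w assume "w \<in> W"
    then show "w \<in> {w + c * m |w c. w \<in> W \<and> c \<in> polys n}"
      by (intro CollectI exI[of _ w] exI[of _ 0]) simp
  qed
qed

text \<open>The module is \<open>M = A[X\<^sub>0,\<dots>,X\<^sub>n]\<close> over \<open>R = A[X\<^sub>0,\<dots>,X\<^sub>n\<^sub>-\<^sub>1]\<close>, and the
  hypothesis \<open>partial_eval n a (p - w) = 0\<close> says \<open>M = W + \<mm>\<^sub>a M\<close> for the kernel
  \<open>\<mm>\<^sub>a\<close> of evaluation at \<open>a\<close>.\<close>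
lemma nakayama_step_multiplier:
  fixes a :: "nat \<Rightarrow> 'a::comm_ring_1"
  assumes W: "is_submodule n W" "W \<subseteq> polys (Suc n)"
    and mod_m: "\<forall>p\<in>polys (Suc n). \<exists>w\<in>W. partial_eval n a (p - w) = 0"
    and r': "r' \<in> polys n" "\<forall>p\<in>polys (Suc n). \<exists>w\<in>W. \<exists>c\<in>polys n. r' * p = w + c * m"
    and m: "m \<in> polys (Suc n)"
  shows "\<exists>j\<in>polys n. eval_mpoly a j = 0 \<and> (r' * r' - j) * m \<in> W"
proof -
  have "r' * m \<in> polys (Suc n)"
    using r'(1) m by (auto intro: polys_mult polys_Suc)
  from bspec[OF mod_m this] obtain w0 where w0: "w0 \<in> W" "partial_eval n a (r' * m - w0) = 0"
    by blast
  define h where "h = r' * m - w0"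
  define c where "c = coeff (to_univ n h)"
  define D where "D = degree (to_univ n h)"
  have hP: "h \<in> polys (Suc n)"
    using \<open>r' * m \<in> polys (Suc n)\<close> w0(1) W(2) unfolding h_def by (auto intro: polys_diff)
  have c: "c k \<in> polys n" "eval_mpoly a (c k) = 0" for k
    using coeff_to_univ_polys[OF hP] w0(2) coeff_partial_eval[of n a h k]
    unfolding c_def h_def by auto
  have "Var n ^ k \<in> polys (Suc n)" for k
    by (intro polys_power polys_Var) simp
  then have "\<forall>k. \<exists>w\<in>W. \<exists>d\<in>polys n. r' * Var n ^ k = w + d * m"
    using r'(2) by blast
  then obtain w d where wd: "\<And>k. w k \<in> W" "\<And>k. d k \<in> polys n" "\<And>k. r' * Var n ^ k = w k + d k * m"
    by metis
  define j where "j = (\<Sum>k\<le>D. c k * d k)"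
  have j: "j \<in> polys n" "eval_mpoly a j = 0"
    unfolding j_def using c wd(2) by (auto intro!: polys_sum polys_mult)
  text \<open>Multiplying \<open>r' m = w\<^sub>0 + \<Sum>\<^sub>k c\<^sub>k X\<^sub>n\<^sup>k\<close> by \<open>r'\<close> expresses \<open>(r'\<^sup>2 - j) m\<close> in \<open>W\<close>.\<close>
  have "h = (\<Sum>k\<le>D. c k * Var n ^ k)"
    unfolding c_def D_def by (rule polys_Suc_expansion[OF hP order.refl])
  then have "r' * m = w0 + (\<Sum>k\<le>D. c k * Var n ^ k)"
    unfolding h_def by (simp add: algebra_simps)
  then have "r' * (r' * m) = r' * w0 + (\<Sum>k\<le>D. c k * (r' * Var n ^ k))"
    by (simp add: distrib_left sum_distrib_left mult_ac)
  also have "(\<Sum>k\<le>D. c k * (r' * Var n ^ k)) = (\<Sum>k\<le>D. c k * w k) + j * m"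
    unfolding j_def wd(3) by (simp add: distrib_left sum.distrib sum_distrib_right mult.assoc)
  finally have eq: "(r' * r' - j) * m = r' * w0 + (\<Sum>k\<le>D. c k * w k)"
    by (simp add: algebra_simps)
  have "(\<Sum>k\<le>D. c k * w k) \<in> W"
    using c(1) wd(1) W(1) by (intro is_submodule_sum[OF W(1)]) (auto simp: is_submodule_def)
  moreover have "r' * w0 \<in> W"
    using W(1) w0(1) r'(1) unfolding is_submodule_def by blast
  ultimately have "(r' * r' - j) * m \<in> W"
    unfolding eq using W(1) unfolding is_submodule_def by blast
  then show ?thesis
    using j by blast
qed

lemma nakayama_step:
  fixes a :: "nat \<Rightarrow> 'a::comm_ring_1"
  assumes W: "is_submodule n W" "W \<subseteq> polys (Suc n)"
    and mod_m: "\<forall>p\<in>polys (Suc n). \<exists>w\<in>W. partial_eval n a (p - w) = 0"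
    and r': "r' \<in> polys n" "eval_mpoly a r' = 1"
      "\<forall>p\<in>polys (Suc n). \<exists>w\<in>W. \<exists>c\<in>polys n. r' * p = w + c * m"
    and m: "m \<in> polys (Suc n)"
  shows "\<exists>r\<in>polys n. eval_mpoly a r = 1 \<and> (\<forall>p\<in>polys (Suc n). r * p \<in> W)"
proof -
  obtain j where j: "j \<in> polys n" "eval_mpoly a j = 0" and key: "(r' * r' - j) * m \<in> W"
    using nakayama_step_multiplier[OF W mod_m r'(1,3) m] by blast
  have s: "r' * r' - j \<in> polys n"
    using polys_diff[OF polys_mult[OF r'(1) r'(1)] j(1)] .
  have "(r' * r' - j) * r' * p \<in> W" if "p \<in> polys (Suc n)" for p
  proof -
    from bspec[OF r'(3) that] obtain w1 c1 where wc: "w1 \<in> W" "c1 \<in> polys n" "r' * p = w1 + c1 * m"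
      by blast
    have "(r' * r' - j) * r' * p = (r' * r' - j) * (r' * p)"
      by (simp add: mult.assoc)
    also have "\<dots> = (r' * r' - j) * w1 + c1 * ((r' * r' - j) * m)"
      unfolding wc(3) by (simp add: algebra_simps)
    finally show ?thesis
      using W(1) s key wc by (auto simp: is_submodule_def)
  qed
  moreover have "(r' * r' - j) * r' \<in> polys n" "eval_mpoly a ((r' * r' - j) * r') = 1"
    using s r' j by (auto intro: polys_mult)
  ultimately show ?thesis
    by blast
qed

lemma nakayama:
  fixes a :: "nat \<Rightarrow> 'a::comm_ring_1" and b :: "nat \<Rightarrow> 'a mpoly"
  assumes "is_submodule n W" "W \<subseteq> polys (Suc n)" "\<And>k. k < d \<Longrightarrow> b k \<in> polys (Suc n)"
    and "\<forall>p\<in>polys (Suc n). \<exists>w\<in>W. \<exists>c. (\<forall>k<d. c k \<in> polys n) \<and> p = w + (\<Sum>k<d. c k * b k)"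
    and "\<forall>p\<in>polys (Suc n). \<exists>w\<in>W. partial_eval n a (p - w) = 0"
  shows "\<exists>r\<in>polys n. eval_mpoly a r = 1 \<and> (\<forall>p\<in>polys (Suc n). r * p \<in> W)"
  using assms
proof (induction d arbitrary: W)
  case 0
  then show ?case
    by (intro bexI[of _ 1]) auto
next
  case (Suc d W)
  define W' where "W' = {w + c * b d |w c. w \<in> W \<and> c \<in> polys n}"
  have bd: "b d \<in> polys (Suc n)" and bk: "\<And>k. k < d \<Longrightarrow> b k \<in> polys (Suc n)"
    by (simp_all add: Suc.prems(3))
  have W': "is_submodule n W'"
    unfolding W'_def by (rule is_submodule_add_cyclic[OF Suc.prems(1)])
  have "W' \<subseteq> polys (Suc n)" "W \<subseteq> W'"
    unfolding W'_def by (rule add_cyclic_subset[OF Suc.prems(2) bd])+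
  moreover have "\<exists>w\<in>W'. \<exists>c. (\<forall>k<d. c k \<in> polys n) \<and> p = w + (\<Sum>k<d. c k * b k)"
    if "p \<in> polys (Suc n)" for p
  proof -
    from bspec[OF Suc.prems(4) that] obtain w c
      where "w \<in> W" "\<forall>k<Suc d. c k \<in> polys n" "p = w + (\<Sum>k<Suc d. c k * b k)"
      by blast
    moreover have "w + c d * b d \<in> W'"
      unfolding W'_def using calculation by blast
    ultimately show ?thesis
      by (intro bexI[of _ "w + c d * b d"] exI[of _ c]) (simp_all add: add.assoc)
  qed
  moreover have "\<forall>p\<in>polys (Suc n). \<exists>w\<in>W'. partial_eval n a (p - w) = 0"
    using Suc.prems(5) \<open>W \<subseteq> W'\<close> by blast
  ultimately obtain r' where r': "r' \<in> polys n" "eval_mpoly a r' = 1" "\<forall>p\<in>polys (Suc n). r' * p \<in> W'"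
    using Suc.IH[OF W' _ bk] by blast
  have "\<forall>p\<in>polys (Suc n). \<exists>w\<in>W. \<exists>c\<in>polys n. r' * p = w + c * b d"
    using r'(3) unfolding W'_def by blast
  then show ?case
    using nakayama_step[OF Suc.prems(1,2,5) r'(1,2) _ bd] by blast
qed

section \<open>Extending zeros along a monic polynomial\<close>

lemma degree_diff_monom_mult_less:
  fixes P G :: "'a::comm_ring_1 poly"
  assumes G: "lead_coeff G = 1" "0 < degree G" and le: "degree G \<le> degree P"
  shows "degree (P - monom (lead_coeff P) (degree P - degree G) * G) < degree P"
proof -
  have coeff_zero: "coeff (P - monom (lead_coeff P) (degree P - degree G) * G) i = 0"
    if "degree P \<le> i" for i
  proof (cases "i = degree P")
    case True
    then show ?thesis
      using le G(1) by (simp add: coeff_monom_mult)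
  next
    case False
    then have "degree P < i" "degree G < i - (degree P - degree G)"
      using that le by auto
    then show ?thesis
      by (simp add: coeff_monom_mult coeff_eq_0)
  qed
  have "degree (P - monom (lead_coeff P) (degree P - degree G) * G) \<le> degree P - 1"
  proof (rule degree_le, intro allI impI)
    fix i assume "degree P - 1 < i"
    then show "coeff (P - monom (lead_coeff P) (degree P - degree G) * G) i = 0"
      using G le by (intro coeff_zero) linarith
  qed
  then show ?thesis
    using G le by linarith
qed

lemma monic_to_univ_degree_0:
  assumes "g \<in> polys (Suc n)" "lead_coeff (to_univ n g) = 1" "degree (to_univ n g) = 0"
  shows "g = 1"
proof -
  have "to_univ n g = 1"
    using assms(2,3) degree_0_id[of "to_univ n g"] by (simp add: one_pCons)
  then show ?thesis
    using poly_to_univ_Var_last[OF assms(1)] by simp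
qed

lemma monic_reduction:
  assumes I: "is_ideal (Suc n) I" and g: "g \<in> I" "lead_coeff (to_univ n g) = 1"
    and p: "p \<in> polys (Suc n)"
  shows "\<exists>w\<in>I. \<exists>c. (\<forall>k<degree (to_univ n g). c k \<in> polys n) \<and>
           p = w + (\<Sum>k<degree (to_univ n g). c k * Var n ^ k)"
  using p
proof (induction "degree (to_univ n p)" arbitrary: p rule: less_induct)
  case less
  define d where "d = degree (to_univ n g)"
  define D where "D = degree (to_univ n p)"
  have gP: "g \<in> polys (Suc n)"
    using g(1) is_ideal_subset[OF I] by blast
  consider "d = 0" | "0 < d" "D < d" | "0 < d" "d \<le> D"
    by linarith
  then show ?case
  proof cases
    case 1
    then have "g = 1"
      using monic_to_univ_degree_0[OF gP g(2)] unfolding d_def by blast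
    then have "p \<in> I"
      using is_ideal_mult[OF I less.prems g(1)] by simp
    then show ?thesis
      using 1 unfolding d_def by (intro bexI[of _ p] exI[of _ "\<lambda>_. 0"]) auto
  next
    case 2
    have "p = (\<Sum>k<d. coeff (to_univ n p) k * Var n ^ k)"
      using polys_Suc_expansion[OF less.prems, of "d - 1"] 2 unfolding D_def
      by (simp add: lessThan_Suc_atMost[symmetric])
    then show ?thesis
      using is_ideal_0[OF I] coeff_to_univ_polys[OF less.prems] unfolding d_def
      by (intro bexI[of _ 0] exI[of _ "coeff (to_univ n p)"]) auto
  next
    case 3
    define q where "q = lead_coeff (to_univ n p) * Var n ^ (D - d)"
    have qP: "q \<in> polys (Suc n)"
      unfolding q_def using polys_Suc[OF coeff_to_univ_polys[OF less.prems]]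
      by (intro polys_mult polys_power polys_Var) simp_all
    have "p - q * g \<in> polys (Suc n)"
      using less.prems qP gP by (intro polys_diff polys_mult)
    moreover have "to_univ n (p - q * g) =
        to_univ n p - monom (lead_coeff (to_univ n p)) (D - d) * to_univ n g"
      unfolding q_def using to_univ_polys[OF coeff_to_univ_polys[OF less.prems]]
      by (simp add: comm_ring_hom.hom_diff[OF comm_ring_hom_to_univ] comm_ring_hom.hom_mult[OF comm_ring_hom_to_univ]
          comm_ring_hom.hom_power[OF comm_ring_hom_to_univ] monom_altdef)
    then have "degree (to_univ n (p - q * g)) < D"
      using degree_diff_monom_mult_less[OF g(2)] 3 unfolding D_def d_def by simp
    ultimately obtain w c where wc: "w \<in> I" "\<forall>k<d. c k \<in> polys n" "p - q * g = w + (\<Sum>k<d. c k * Var n ^ k)"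
      using less.hyps unfolding D_def d_def by blast
    have "w + q * g \<in> I"
      using is_ideal_add[OF I wc(1) is_ideal_mult[OF I qP g(1)]] .
    moreover have "p = (w + q * g) + (\<Sum>k<d. c k * Var n ^ k)"
      using wc(3) by (simp add: algebra_simps)
    ultimately show ?thesis
      using wc(2) unfolding d_def by blast
  qed
qed

text \<open>Nakayama applies with the generators \<open>1, X\<^sub>n, \<dots>, X\<^sub>n\<^sup>d\<^sup>-\<^sup>1\<close>, since
  \<open>p = p f + (p - p f)\<close> and \<open>p - p f\<close> specialises to \<open>0\<close> when \<open>f\<close> specialises to \<open>1\<close>;
  the resulting \<open>r\<close> lies in \<open>I \<inter> A[X\<^sub>0,\<dots>,X\<^sub>n\<^sub>-\<^sub>1]\<close> but does not vanish at \<open>a\<close>.\<close>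
lemma partial_eval_neq_1:
  fixes a :: "nat \<Rightarrow> 'a::comm_ring_1"
  assumes I: "is_ideal (Suc n) I" and g: "g \<in> I" "lead_coeff (to_univ n g) = 1"
    and a: "\<forall>r \<in> I \<inter> polys n. eval_mpoly a r = 0"
    and f: "f \<in> I"
  shows "partial_eval n a f \<noteq> 1"
proof
  assume f1: "partial_eval n a f = 1"
  have IP: "I \<subseteq> polys (Suc n)"
    by (rule is_ideal_subset[OF I])
  have "p - p * f \<in> polys (Suc n) \<and> partial_eval n a (p - (p * f)) = 0" if "p \<in> polys (Suc n)" for p
    using that f f1 IP
    by (auto intro!: polys_diff polys_mult simp: comm_ring_hom.hom_diff[OF comm_ring_hom_partial_eval]
        comm_ring_hom.hom_mult[OF comm_ring_hom_partial_eval])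
  then have "\<forall>p\<in>polys (Suc n). \<exists>w\<in>I. partial_eval n a (p - w) = 0"
    using is_ideal_mult[OF I _ f] by blast
  moreover have "Var n ^ k \<in> polys (Suc n)" for k
    by (intro polys_power polys_Var) simp
  ultimately obtain r where r: "r \<in> polys n" "eval_mpoly a r = 1" "\<forall>p\<in>polys (Suc n). r * p \<in> I"
    using nakayama[OF is_submodule_ideal[OF I] IP, of "degree (to_univ n g)" "\<lambda>k. Var n ^ k"]
      monic_reduction[OF I g] by blast
  have "r \<in> I"
    using bspec[OF r(3) polys_one] by simp
  then show False
    using a r(1,2) by auto
qed

lemma monic_least_degree_dvd:
  fixes h :: "'a::comm_ring_1 poly"
  assumes h: "h \<in> J" "lead_coeff h = 1"
    and least: "\<And>f. f \<in> J \<Longrightarrow> f \<noteq> 0 \<Longrightarrow> degree h \<le> degree f"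
    and closed: "\<And>f k. f \<in> J \<Longrightarrow> f - k * h \<in> J"
    and f: "f \<in> J"
  shows "h dvd f"
proof -
  obtain q r where qr: "pseudo_divmod f h = (q, r)"
    by (metis surj_pair)
  have h0: "h \<noteq> 0"
    using h(2) by auto
  from pseudo_divmod[OF h0 qr] h(2)
  have eq: "f = h * q + r" and r: "r = 0 \<or> degree r < degree h"
    by auto
  have "r = f - q * h"
    using eq by (simp add: algebra_simps)
  then have "r \<in> J"
    using closed[OF f] by simp
  then have "r = 0"
    using r least by fastforce
  then show ?thesis
    using eq by simp
qed

lemma alg_closed_fieldD:
  assumes "alg_closed_field TYPE('a::idom)"
  shows alg_closed_field_inverse: "(x::'a) \<noteq> 0 \<Longrightarrow> \<exists>y. x * y = 1"
    and alg_closed_field_root: "degree (p::'a poly) > 0 \<Longrightarrow> \<exists>x. poly p x = 0"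
  using assms unfolding alg_closed_field_def by blast+

lemma exists_monic_least_partial_eval:
  fixes a :: "nat \<Rightarrow> 'a::idom"
  assumes AC: "alg_closed_field TYPE('a)"
    and I: "is_ideal (Suc n) I" and g: "g \<in> I" "lead_coeff (to_univ n g) = 1"
  obtains f1 where "f1 \<in> I" "lead_coeff (partial_eval n a f1) = 1"
    "\<And>f. f \<in> I \<Longrightarrow> partial_eval n a f \<noteq> 0 \<Longrightarrow> degree (partial_eval n a f1) \<le> degree (partial_eval n a f)"
proof -
  have "coeff (partial_eval n a g) (degree (to_univ n g)) = 1"
    using g(2) by (simp add: coeff_partial_eval)
  then have "partial_eval n a g \<noteq> 0"
    by auto
  then obtain f0 where f0: "f0 \<in> I" "partial_eval n a f0 \<noteq> 0"
    and least: "\<And>f. f \<in> I \<Longrightarrow> partial_eval n a f \<noteq> 0 \<Longrightarrow> degree (partial_eval n a f0) \<le> degree (partial_eval n a f)"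
    using ex_has_least_nat[of "\<lambda>f. f \<in> I \<and> partial_eval n a f \<noteq> 0" g "\<lambda>f. degree (partial_eval n a f)"] g(1)
    by blast
  obtain u where u: "lead_coeff (partial_eval n a f0) * u = 1"
    using alg_closed_field_inverse[OF AC, of "lead_coeff (partial_eval n a f0)"] f0(2) by auto
  then have u0: "u \<noteq> 0"
    by (metis mult_zero_right zero_neq_one)
  have eq: "partial_eval n a (const_poly u * f0) = [:u:] * partial_eval n a f0"
    by (simp add: comm_ring_hom.hom_mult[OF comm_ring_hom_partial_eval])
  show ?thesis
  proof (rule that[of "const_poly u * f0"])
    show "const_poly u * f0 \<in> I"
      by (rule is_ideal_mult[OF I polys_const f0(1)])
    show "lead_coeff (partial_eval n a (const_poly u * f0)) = 1"
      unfolding eq using u u0 by (simp add: lead_coeff_mult mult.commute)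
    show "degree (partial_eval n a (const_poly u * f0)) \<le> degree (partial_eval n a f)"
      if "f \<in> I" "partial_eval n a f \<noteq> 0" for f
      unfolding eq using u0 f0(2) least[OF that] by (simp add: degree_mult_eq)
  qed
qed

lemma partial_eval_least_dvd:
  assumes I: "is_ideal (Suc n) I" and f1: "f1 \<in> I" "lead_coeff (partial_eval n a f1) = 1"
    and least: "\<And>f. f \<in> I \<Longrightarrow> partial_eval n a f \<noteq> 0 \<Longrightarrow> degree (partial_eval n a f1) \<le> degree (partial_eval n a f)"
    and f: "f \<in> I"
  shows "partial_eval n a f1 dvd partial_eval n a f"
proof (rule monic_least_degree_dvd[where J = "partial_eval n a ` I"])
  note hom = comm_ring_hom_partial_eval[of n a]
  show "partial_eval n a f1 \<in> partial_eval n a ` I" "partial_eval n a f \<in> partial_eval n a ` I"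
    using f1(1) f by auto
  show "degree (partial_eval n a f1) \<le> degree F" if "F \<in> partial_eval n a ` I" "F \<noteq> 0" for F
    using that least by auto
  show "F - k * partial_eval n a f1 \<in> partial_eval n a ` I" if F: "F \<in> partial_eval n a ` I" for F k
  proof -
    obtain f' where f': "f' \<in> I" "F = partial_eval n a f'"
      using F by blast
    have "f' - of_univ n k * f1 \<in> I"
      by (rule is_ideal_diff[OF I f'(1) is_ideal_mult[OF I of_univ_polys f1(1)]])
    moreover have "partial_eval n a (f' - of_univ n k * f1) = F - k * partial_eval n a f1"
      unfolding f'(2)
      by (simp add: comm_ring_hom.hom_diff[OF hom] comm_ring_hom.hom_mult[OF hom] partial_eval_of_univ)
    ultimately show ?thesis
      by (metis image_eqI)
  qed
qed (use f1(2) in simp)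

text \<open>Over an algebraically closed field, \<open>partial_eval n a ` I\<close> is a proper ideal of
  \<open>A[X\<^sub>n]\<close>, hence generated by a monic polynomial of positive degree, whose root extends \<open>a\<close>.\<close>
lemma extend_zero_monic:
  fixes a :: "nat \<Rightarrow> 'a::idom"
  assumes AC: "alg_closed_field TYPE('a)"
    and I: "is_ideal (Suc n) I" and g: "g \<in> I" "lead_coeff (to_univ n g) = 1"
    and a: "\<forall>r \<in> I \<inter> polys n. eval_mpoly a r = 0"
  shows "\<exists>b. \<forall>f\<in>I. eval_mpoly (a(n := b)) f = 0"
proof -
  obtain f1 where f1: "f1 \<in> I" "lead_coeff (partial_eval n a f1) = 1"
    and least: "\<And>f. f \<in> I \<Longrightarrow> partial_eval n a f \<noteq> 0 \<Longrightarrow> degree (partial_eval n a f1) \<le> degree (partial_eval n a f)"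
    using exists_monic_least_partial_eval[OF AC I g] by blast
  have "degree (partial_eval n a f1) > 0"
  proof (rule ccontr)
    assume "\<not> degree (partial_eval n a f1) > 0"
    then have "partial_eval n a f1 = 1"
      using degree_0_id[of "partial_eval n a f1"] f1(2) by (simp add: one_pCons)
    then show False
      using partial_eval_neq_1[OF I g a f1(1)] by simp
  qed
  then obtain b where b: "poly (partial_eval n a f1) b = 0"
    using alg_closed_field_root[OF AC] by blast
  have "eval_mpoly (a(n := b)) f = 0" if f: "f \<in> I" for f
  proof -
    have "partial_eval n a f1 dvd partial_eval n a f"
      by (rule partial_eval_least_dvd[OF I f1 _ f]) (rule least)
    then obtain k where "partial_eval n a f = partial_eval n a f1 * k"
      by (elim dvdE)
    then have "poly (partial_eval n a f) b = 0"
      using b by simp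
    then show ?thesis
      using poly_partial_eval[of f n a b] f is_ideal_subset[OF I] by auto
  qed
  then show ?thesis
    by blast
qed

section \<open>Nagata's change of variables\<close>

lemma base_digits_unique:
  fixes D :: nat
  assumes "0 < D" "\<forall>j\<le>k. u j < D" "\<forall>j\<le>k. v j < D"
    and "(\<Sum>j\<le>k. u j * D ^ j) = (\<Sum>j\<le>k. v j * D ^ j)" "j \<le> k"
  shows "u j = v j"
  using assms(2-)
proof (induction k arbitrary: u v j)
  case (Suc k)
  have split: "(\<Sum>j\<le>Suc k. w j * D ^ j) = w 0 + D * (\<Sum>j\<le>k. w (Suc j) * D ^ j)" for w
    unfolding sum.atMost_Suc_shift by (simp add: sum_distrib_left mult_ac)
  have "u 0 < D" "v 0 < D"
    using Suc.prems by auto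
  moreover have "(u 0 + D * (\<Sum>j\<le>k. u (Suc j) * D ^ j)) mod D = (v 0 + D * (\<Sum>j\<le>k. v (Suc j) * D ^ j)) mod D"
    using Suc.prems(3) split by metis
  ultimately have head: "u 0 = v 0"
    by simp
  then have "(\<Sum>j\<le>k. u (Suc j) * D ^ j) = (\<Sum>j\<le>k. v (Suc j) * D ^ j)"
    using Suc.prems(3) split[of u] split[of v] assms(1) by simp
  then have "u (Suc j') = v (Suc j')" if "j' \<le> k" for j'
    using Suc.IH[of "\<lambda>j. u (Suc j)" "\<lambda>j. v (Suc j)" j'] Suc.prems(1,2) that by simp
  then show ?case
    using head Suc.prems(4) by (cases j) auto
qed simp

lemma lead_coeff_sum_distinct_degree:
  fixes t :: "'x \<Rightarrow> 'b::comm_ring_1 poly"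
  assumes fin: "finite S" and ne: "S \<noteq> {}" and nz: "\<forall>s\<in>S. t s \<noteq> 0"
    and inj: "inj_on (\<lambda>s. degree (t s)) S"
  shows "\<exists>s\<in>S. lead_coeff (sum t S) = lead_coeff (t s)"
proof -
  define M where "M = Max ((\<lambda>s. degree (t s)) ` S)"
  have "M \<in> (\<lambda>s. degree (t s)) ` S"
    unfolding M_def using fin ne by (intro Max_in) auto
  then obtain s0 where s0: "s0 \<in> S" "degree (t s0) = M"
    by auto
  have le: "degree (t s) \<le> M" if "s \<in> S" for s
    unfolding M_def using fin that by (intro Max_ge) auto
  have lt: "degree (t s) < M" if "s \<in> S" "s \<noteq> s0" for s
    using le[OF that(1)] inj s0 that unfolding inj_on_def by (metis le_neq_implies_less)
  have cM: "coeff (sum t S) M = lead_coeff (t s0)"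
  proof -
    have "coeff (sum t S) M = coeff (t s0) M + (\<Sum>s\<in>S - {s0}. coeff (t s) M)"
      unfolding coeff_sum by (rule sum.remove[OF fin s0(1)])
    also have "(\<Sum>s\<in>S - {s0}. coeff (t s) M) = 0"
      using lt by (intro sum.neutral) (auto intro: coeff_eq_0)
    finally show ?thesis
      using s0 by simp
  qed
  have "degree (sum t S) \<le> M"
    using le by (intro degree_le) (auto simp: coeff_sum intro!: sum.neutral coeff_eq_0 dest: le)
  moreover have "coeff (sum t S) M \<noteq> 0"
    using cM nz s0 by (metis leading_coeff_0_iff)
  ultimately have "degree (sum t S) = M"
    using le_degree by (metis antisym)
  then have "lead_coeff (sum t S) = lead_coeff (t s0)"
    using cM s0 by simp
  then show ?thesis
    using s0(1) by blast
qed

text \<open>The substitution \<open>X\<^sub>i \<mapsto> X\<^sub>i + X\<^sub>n\<^bsup>B\<^sup>i\<^sup>+\<^sup>1\<^esup>\<close> (\<open>i < n\<close>), with \<open>B\<close> larger than every exponent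
  occurring in \<open>f\<close>, turns distinct monomials of \<open>f\<close> into polynomials in \<open>X\<^sub>n\<close> of distinct
  degrees (base-\<open>B\<close> digits), so that the image of \<open>f\<close> has a constant leading coefficient.\<close>
definition nagata_base :: "'a::comm_ring_1 mpoly \<Rightarrow> nat" where
  "nagata_base f = Suc (\<Sum>m\<in>keys f. \<Sum>i\<in>keys m. lookup m i)"

definition nagata_weight :: "nat \<Rightarrow> 'a::comm_ring_1 mpoly \<Rightarrow> nat \<Rightarrow> nat" where
  "nagata_weight n f i = (if i < n then nagata_base f ^ Suc i else 1)"

definition nagata_var :: "nat \<Rightarrow> 'a::comm_ring_1 mpoly \<Rightarrow> nat \<Rightarrow> 'a mpoly" where
  "nagata_var n f i = (if i < n then Var i + Var n ^ nagata_weight n f i else Var i)"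

definition nagata_inv_var :: "nat \<Rightarrow> 'a::comm_ring_1 mpoly \<Rightarrow> nat \<Rightarrow> 'a mpoly" where
  "nagata_inv_var n f i = (if i < n then Var i - Var n ^ nagata_weight n f i else Var i)"

definition nagata :: "nat \<Rightarrow> 'a::comm_ring_1 mpoly \<Rightarrow> 'a mpoly \<Rightarrow> 'a mpoly" where
  "nagata n f = eval_hom const_poly (nagata_var n f)"

definition nagata_inv :: "nat \<Rightarrow> 'a::comm_ring_1 mpoly \<Rightarrow> 'a mpoly \<Rightarrow> 'a mpoly" where
  "nagata_inv n f = eval_hom const_poly (nagata_inv_var n f)"

lemma lookup_less_nagata_base:
  assumes "m \<in> keys f"
  shows "lookup m i < nagata_base f"
proof (cases "i \<in> keys m")
  case True
  have "lookup m i \<le> (\<Sum>i\<in>keys m. lookup m i)"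
    using True by (intro member_le_sum) auto
  also have "\<dots> \<le> (\<Sum>m\<in>keys f. \<Sum>i\<in>keys m. lookup m i)"
    using assms by (intro member_le_sum[of m "keys f" "\<lambda>m. \<Sum>i\<in>keys m. lookup m i"]) auto
  finally show ?thesis
    unfolding nagata_base_def by simp
qed (simp add: nagata_base_def in_keys_iff)

lemma comm_ring_hom_nagata_inv: "comm_ring_hom (nagata_inv n f)"
  unfolding nagata_inv_def by (rule comm_ring_hom.comm_ring_hom_eval_hom[OF comm_ring_hom_const_poly])

lemma nagata_inv_const [simp]: "nagata_inv n f (const_poly c) = const_poly c"
  and nagata_inv_Var: "nagata_inv n f (Var i) = nagata_inv_var n f i"
  by (simp_all add: nagata_inv_def comm_ring_hom.eval_hom_const[OF comm_ring_hom_const_poly]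
      comm_ring_hom.eval_hom_Var[OF comm_ring_hom_const_poly])

lemma nagata_inv_nagata:
  assumes "p \<in> polys (Suc n)"
  shows "nagata_inv n f (nagata n f p) = p"
proof -
  have inv: "comm_ring_hom (nagata_inv n f)"
    by (rule comm_ring_hom_nagata_inv)
  have "nagata_inv n f (nagata n f p) =
      eval_hom (\<lambda>c. nagata_inv n f (const_poly c)) (\<lambda>i. nagata_inv n f (nagata_var n f i)) p"
    unfolding nagata_def by (rule comm_ring_hom.hom_eval_hom[OF comm_ring_hom_const_poly inv])
  also have "\<dots> = eval_hom const_poly (\<lambda>i. nagata_inv n f (nagata_var n f i)) p"
    by simp
  also have "\<dots> = eval_hom const_poly Var p"
    by (rule comm_ring_hom.eval_hom_cong[OF comm_ring_hom_const_poly assms])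
      (auto simp: nagata_var_def nagata_inv_var_def nagata_inv_Var comm_ring_hom.hom_add[OF inv]
        comm_ring_hom.hom_power[OF inv])
  finally show ?thesis
    by simp
qed

lemma nagata_polys: "p \<in> polys (Suc n) \<Longrightarrow> nagata n f p \<in> polys (Suc n)"
  unfolding nagata_def
  by (rule eval_hom_polys) (auto simp: nagata_var_def intro!: polys_add polys_power polys_Var)

lemma nagata_inv_polys: "p \<in> polys (Suc n) \<Longrightarrow> nagata_inv n f p \<in> polys (Suc n)"
  unfolding nagata_inv_def
  by (rule eval_hom_polys) (auto simp: nagata_inv_var_def intro!: polys_diff polys_power polys_Var)

lemma eval_nagata:
  "eval_mpoly b (nagata n f p) = eval_mpoly (\<lambda>i. if i < n then b i + b n ^ nagata_weight n f i else b i) p"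
proof -
  have "eval_mpoly b (nagata n f p) =
      eval_hom (\<lambda>c. eval_mpoly b (const_poly c)) (\<lambda>i. eval_mpoly b (nagata_var n f i)) p"
    unfolding nagata_def by (rule comm_ring_hom.hom_eval_hom[OF comm_ring_hom_const_poly comm_ring_hom_eval_mpoly])
  also have "\<dots> = eval_hom (\<lambda>c. c) (\<lambda>i. if i < n then b i + b n ^ nagata_weight n f i else b i) p"
    by (intro arg_cong2[where f = "\<lambda>x y. eval_hom x y p"]) (auto simp: nagata_var_def fun_eq_iff)
  finally show ?thesis
    by (simp add: eval_mpoly_eq_eval_hom)
qed

lemma to_univ_nagata_var:
  fixes f :: "'a::idom mpoly"
  assumes "i \<le> n"
  shows "lead_coeff (to_univ n (nagata_var n f i)) = 1 \<and> degree (to_univ n (nagata_var n f i)) = nagata_weight n f i"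
proof (cases "i < n")
  case True
  have w: "nagata_weight n f i > 0"
    using True by (simp add: nagata_weight_def nagata_base_def)
  have "to_univ n (nagata_var n f i) = [:Var i:] + monom 1 (nagata_weight n f i)"
    using True by (simp add: nagata_var_def comm_ring_hom.hom_add[OF comm_ring_hom_to_univ]
        comm_ring_hom.hom_power[OF comm_ring_hom_to_univ] to_univ_Var monom_altdef)
  moreover have "degree ([:Var i:] + monom (1::'a mpoly) (nagata_weight n f i)) = nagata_weight n f i"
    using w by (subst degree_add_eq_right) (auto simp: degree_monom_eq)
  moreover have "coeff ([:Var i:] + monom (1::'a mpoly) (nagata_weight n f i)) (nagata_weight n f i) = 1"
    using w by (simp add: coeff_pCons split: nat.splits)
  ultimately show ?thesis
    by simp
next
  case False
  then show ?thesis
    using assms by (simp add: nagata_var_def nagata_weight_def)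
qed

text \<open>Digit \<open>0\<close> of the weight is the exponent of \<open>X\<^sub>n\<close>, digit \<open>i + 1\<close> that of \<open>X\<^sub>i\<close>.\<close>
lemma nagata_weight_sum_eq_digits:
  assumes "keys m \<subseteq> {..n}"
  shows "(\<Sum>i\<in>keys m. lookup m i * nagata_weight n f i) =
    (\<Sum>j\<le>n. (if j = 0 then lookup m n else lookup m (j - 1)) * nagata_base f ^ j)"
proof -
  have "(\<Sum>i\<in>keys m. lookup m i * nagata_weight n f i) = (\<Sum>i\<le>n. lookup m i * nagata_weight n f i)"
    using assms by (intro sum.mono_neutral_left) (auto simp: in_keys_iff)
  also have "\<dots> = (\<Sum>i<n. lookup m i * nagata_base f ^ Suc i) + lookup m n"
    by (simp add: lessThan_Suc_atMost[symmetric] nagata_weight_def)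
  also have "\<dots> = (\<Sum>j\<le>n. (if j = 0 then lookup m n else lookup m (j - 1)) * nagata_base f ^ j)"
    by (simp add: sum.atMost_shift)
  finally show ?thesis .
qed

lemma inj_on_nagata_degree:
  assumes "f \<in> polys (Suc n)"
  shows "inj_on (\<lambda>m. \<Sum>i\<in>keys m. lookup m i * nagata_weight n f i) (keys f)"
proof (rule inj_onI)
  fix m m' assume m: "m \<in> keys f" and m': "m' \<in> keys f"
    and eq: "(\<Sum>i\<in>keys m. lookup m i * nagata_weight n f i) = (\<Sum>i\<in>keys m'. lookup m' i * nagata_weight n f i)"
  define digit :: "(nat \<Rightarrow>\<^sub>0 nat) \<Rightarrow> nat \<Rightarrow> nat"
    where "digit = (\<lambda>m j. if j = 0 then lookup m n else lookup m (j - 1))"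
  have keys: "keys \<mu> \<subseteq> {..n}" if "\<mu> \<in> keys f" for \<mu>
    using polys_memD[OF assms that] by (auto simp: less_Suc_eq_le)
  have digits: "digit m j = digit m' j" if "j \<le> n" for j
    using base_digits_unique[of "nagata_base f" n "digit m" "digit m'" j] eq that
      nagata_weight_sum_eq_digits[OF keys[OF m], of f] nagata_weight_sum_eq_digits[OF keys[OF m'], of f]
      lookup_less_nagata_base[OF m] lookup_less_nagata_base[OF m']
    by (simp add: digit_def nagata_base_def)
  show "m = m'"
  proof (rule poly_mapping_eqI)
    fix i
    show "lookup m i = lookup m' i"
    proof (cases "i \<le> n")
      case True
      then show ?thesis
        using digits[of 0] digits[of "Suc i"] by (cases "i = n") (simp_all add: digit_def)
    next
      case False
      then have "i \<notin> keys m" "i \<notin> keys m'"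
        using keys[OF m] keys[OF m'] by auto
      then show ?thesis
        by (simp add: in_keys_iff)
    qed
  qed
qed

lemma lead_coeff_to_univ_nagata:
  fixes f :: "'a::idom mpoly"
  assumes fP: "f \<in> polys (Suc n)" and f0: "f \<noteq> 0"
  shows "\<exists>m\<in>keys f. lead_coeff (to_univ n (nagata n f f)) = const_poly (lookup f m)"
proof -
  define t where "t = (\<lambda>m. [:const_poly (lookup f m):] * eval_monom (\<lambda>i. to_univ n (nagata_var n f i)) m)"
  have keys: "keys m \<subseteq> {..n}" if "m \<in> keys f" for m
    using polys_memD[OF fP that] by (auto simp: less_Suc_eq_le)
  have var: "lead_coeff (to_univ n (nagata_var n f i)) = 1"
    "degree (to_univ n (nagata_var n f i)) = nagata_weight n f i" if "i \<le> n" for i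
    using to_univ_nagata_var[OF that] by auto
  have var0: "to_univ n (nagata_var n f i) \<noteq> 0" if "i \<le> n" for i
    using var(1)[OF that] by auto
  have c0: "const_poly (lookup f m) \<noteq> 0" if "m \<in> keys f" for m
    using that unfolding const_poly_def in_keys_iff by (metis lookup_single_eq lookup_zero)
  have lm: "lead_coeff (eval_monom (\<lambda>i. to_univ n (nagata_var n f i)) m) = 1" if "m \<in> keys f" for m
    unfolding eval_monom_def lead_coeff_prod lead_coeff_power
    using var keys[OF that] by (intro prod.neutral) (auto simp: subset_iff)
  have t: "lead_coeff (t m) = const_poly (lookup f m)" "t m \<noteq> 0"
    "degree (t m) = (\<Sum>i\<in>keys m. lookup m i * nagata_weight n f i)" if "m \<in> keys f" for m
  proof -
    have "degree (eval_monom (\<lambda>i. to_univ n (nagata_var n f i)) m) = (\<Sum>i\<in>keys m. lookup m i * nagata_weight n f i)"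
      unfolding eval_monom_def using keys[OF that] var var0
      by (subst degree_prod_sum_eq) (auto simp: degree_power_eq subset_iff intro!: sum.cong)
    then show "lead_coeff (t m) = const_poly (lookup f m)" "t m \<noteq> 0"
      "degree (t m) = (\<Sum>i\<in>keys m. lookup m i * nagata_weight n f i)"
      unfolding t_def using lm[OF that] c0[OF that] by (auto simp: lead_coeff_mult degree_mult_eq)
  qed
  have "to_univ n (nagata n f f) = sum t (keys f)"
    unfolding nagata_def t_def eval_hom_def
    by (simp add: comm_ring_hom.hom_sum[OF comm_ring_hom_to_univ] comm_ring_hom.hom_mult[OF comm_ring_hom_to_univ]
        comm_ring_hom.hom_prod[OF comm_ring_hom_to_univ] comm_ring_hom.hom_power[OF comm_ring_hom_to_univ] eval_monom_def)
  moreover have "inj_on (\<lambda>m. degree (t m)) (keys f)"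
    using inj_on_nagata_degree[OF fP] by (simp add: inj_on_def t(3))
  ultimately show ?thesis
    using lead_coeff_sum_distinct_degree[of "keys f" t] f0 t(1,2) by auto
qed

section \<open>The Nullstellensatz\<close>

lemma is_ideal_preimage:
  assumes I: "is_ideal N I" and hom: "comm_ring_hom \<phi>" and P: "\<And>p. p \<in> polys N \<Longrightarrow> \<phi> p \<in> polys N"
  shows "is_ideal N {q \<in> polys N. \<phi> q \<in> I}"
  unfolding is_ideal_def
  using is_ideal_0[OF I] is_ideal_diff[OF I] is_ideal_mult[OF I] P
  by (auto simp: comm_ring_hom.hom_zero[OF hom] comm_ring_hom.hom_diff[OF hom] comm_ring_hom.hom_mult[OF hom]
      intro: polys_diff polys_mult)

lemma weak_nullstellensatz_0:
  fixes I :: "'a::idom mpoly set"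
  assumes AC: "alg_closed_field TYPE('a)" and I: "is_ideal 0 I" "1 \<notin> I"
  shows "\<forall>p\<in>I. eval_mpoly (\<lambda>_. 0) p = 0"
proof
  fix p assume p: "p \<in> I"
  have pc: "p = const_poly (lookup p 0)"
    using polys_0_eq_const p is_ideal_subset[OF I(1)] by blast
  show "eval_mpoly (\<lambda>_. 0) p = 0"
  proof (rule ccontr)
    assume "eval_mpoly (\<lambda>_. 0) p \<noteq> 0"
    then have "lookup p 0 \<noteq> 0"
      using pc by (metis eval_mpoly_const)
    then obtain u where "lookup p 0 * u = 1"
      using alg_closed_field_inverse[OF AC] by blast
    then have "const_poly u * p = 1"
      using pc const_poly_mult[of u "lookup p 0"] by (simp add: mult.commute)
    then show False
      using is_ideal_mult[OF I(1) polys_const p, of u] I(2) by simp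
  qed
qed

lemma monic_nagata:
  fixes f :: "'a::idom mpoly"
  assumes AC: "alg_closed_field TYPE('a)" and f: "f \<in> polys (Suc n)" "f \<noteq> 0"
  shows "\<exists>u. lead_coeff (to_univ n (const_poly u * nagata n f f)) = 1"
proof -
  obtain m where m: "m \<in> keys f" "lead_coeff (to_univ n (nagata n f f)) = const_poly (lookup f m)"
    using lead_coeff_to_univ_nagata[OF f] by blast
  obtain u where u: "lookup f m * u = 1"
    using m(1) alg_closed_field_inverse[OF AC, of "lookup f m"] by (auto simp: in_keys_iff)
  have "lead_coeff (to_univ n (const_poly u * nagata n f f)) = const_poly u * const_poly (lookup f m)"
    using m(2) by (simp add: comm_ring_hom.hom_mult[OF comm_ring_hom_to_univ] lead_coeff_mult)
  also have "\<dots> = 1"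
    using u const_poly_mult[of u "lookup f m"] by (simp add: mult.commute)
  finally show ?thesis
    by blast
qed

theorem weak_nullstellensatz:
  fixes I :: "'a::idom mpoly set"
  assumes AC: "alg_closed_field TYPE('a)"
  shows "is_ideal n I \<Longrightarrow> 1 \<notin> I \<Longrightarrow> \<exists>a\<in>points n. \<forall>p\<in>I. eval_mpoly a p = 0"
proof (induction n arbitrary: I)
  case 0
  then show ?case
    using weak_nullstellensatz_0[OF AC] by (force simp: points_def)
next
  case (Suc n)
  note I = Suc.prems(1)
  show ?case
  proof (cases "\<forall>f\<in>I. f = 0")
    case True
    then show ?thesis
      by (intro bexI[of _ "\<lambda>_. 0"]) (auto simp: points_def)
  next
    case False
    then obtain f where f: "f \<in> I" "f \<noteq> 0"
      by blast
    have fP: "f \<in> polys (Suc n)"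
      using f(1) is_ideal_subset[OF I] by blast
    define I2 where "I2 = {q \<in> polys (Suc n). nagata_inv n f q \<in> I}"
    have I2: "is_ideal (Suc n) I2"
      unfolding I2_def by (rule is_ideal_preimage[OF I comm_ring_hom_nagata_inv nagata_inv_polys])
    have "1 \<notin> I2"
      using Suc.prems(2) by (simp add: I2_def comm_ring_hom.hom_one[OF comm_ring_hom_nagata_inv])
    have nagata_I2: "nagata n f p \<in> I2" if "p \<in> I" for p
      unfolding I2_def using that is_ideal_subset[OF I] nagata_inv_nagata nagata_polys by fastforce
    obtain u where monic: "lead_coeff (to_univ n (const_poly u * nagata n f f)) = 1"
      using monic_nagata[OF AC fP f(2)] by blast
    have g: "const_poly u * nagata n f f \<in> I2"
      by (rule is_ideal_mult[OF I2 polys_const nagata_I2[OF f(1)]])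
    obtain a where a: "a \<in> points n" "\<forall>p\<in>I2 \<inter> polys n. eval_mpoly a p = 0"
      using Suc.IH[OF is_ideal_contraction[OF I2]] \<open>1 \<notin> I2\<close> by blast
    obtain b where b: "\<forall>q\<in>I2. eval_mpoly (a(n := b)) q = 0"
      using extend_zero_monic[OF AC I2 g monic a(2)] by blast
    define a' where "a' = a(n := b)"
    define c where "c = (\<lambda>i. if i < n then a' i + a' n ^ nagata_weight n f i else a' i)"
    have "c \<in> points (Suc n)"
      using a(1) unfolding c_def a'_def points_def by auto
    moreover have "\<forall>p\<in>I. eval_mpoly c p = 0"
      using b nagata_I2 eval_nagata[of a' n f] unfolding c_def a'_def by metis
    ultimately show ?thesis
      by blast
  qed
qed


lemma gen_ideal_iff:
  "x \<in> gen_ideal n gs \<longleftrightarrow> (\<exists>c. (\<forall>i<length gs. c i \<in> polys n) \<and> x = (\<Sum>i<length gs. c i * gs ! i))"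
proof
  assume "x \<in> gen_ideal n gs"
  then obtain qs where "length qs = length gs" "set qs \<subseteq> polys n" "x = (\<Sum>i<length gs. qs ! i * gs ! i)"
    unfolding gen_ideal_def by blast
  then show "\<exists>c. (\<forall>i<length gs. c i \<in> polys n) \<and> x = (\<Sum>i<length gs. c i * gs ! i)"
    by (intro exI[of _ "(!) qs"]) (auto simp: subset_iff)
next
  assume "\<exists>c. (\<forall>i<length gs. c i \<in> polys n) \<and> x = (\<Sum>i<length gs. c i * gs ! i)"
  then obtain c where c: "\<forall>i<length gs. c i \<in> polys n" "x = (\<Sum>i<length gs. c i * gs ! i)"
    by blast
  then have "length (map c [0..<length gs]) = length gs" "set (map c [0..<length gs]) \<subseteq> polys n"
    "x = (\<Sum>i<length gs. map c [0..<length gs] ! i * gs ! i)"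
    by auto
  then show "x \<in> gen_ideal n gs"
    unfolding gen_ideal_def by blast
qed

lemma is_ideal_gen_ideal:
  fixes gs :: "'a::comm_ring_1 mpoly list"
  assumes "set gs \<subseteq> polys n"
  shows "is_ideal n (gen_ideal n gs)"
  unfolding is_ideal_def
proof (intro conjI ballI subsetI)
  fix x assume "x \<in> gen_ideal n gs"
  then obtain c where "\<forall>i<length gs. c i \<in> polys n" "x = (\<Sum>i<length gs. c i * gs ! i)"
    unfolding gen_ideal_iff by blast
  then show "x \<in> polys n"
    using assms by (auto intro!: polys_sum polys_mult)
next
  show "0 \<in> gen_ideal n gs"
    unfolding gen_ideal_iff by (intro exI[of _ "\<lambda>_. 0"]) auto
next
  fix x y :: "'a mpoly" assume "x \<in> gen_ideal n gs" "y \<in> gen_ideal n gs"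
  then obtain c d where "\<forall>i<length gs. c i \<in> polys n" "x = (\<Sum>i<length gs. c i * gs ! i)"
     "\<forall>i<length gs. d i \<in> polys n" "y = (\<Sum>i<length gs. d i * gs ! i)"
    unfolding gen_ideal_iff by blast
  then show "x - y \<in> gen_ideal n gs"
    unfolding gen_ideal_iff
    by (intro exI[of _ "\<lambda>i. c i - d i"]) (auto simp: sum_subtractf algebra_simps intro: polys_diff)
next
  fix p y :: "'a mpoly" assume p: "p \<in> polys n" and "y \<in> gen_ideal n gs"
  then obtain d where "\<forall>i<length gs. d i \<in> polys n" "y = (\<Sum>i<length gs. d i * gs ! i)"
    unfolding gen_ideal_iff by blast
  then show "p * y \<in> gen_ideal n gs"
    unfolding gen_ideal_iff using p
    by (intro exI[of _ "\<lambda>i. p * d i"]) (auto simp: sum_distrib_left mult.assoc intro: polys_mult)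
qed

lemma nth_mem_gen_ideal:
  assumes "i < length gs"
  shows "gs ! i \<in> gen_ideal n gs"
  unfolding gen_ideal_iff
proof (intro exI[of _ "\<lambda>j. if j = i then 1 else 0"] conjI allI impI)
  have "(\<Sum>j<length gs. (if j = i then 1 else 0) * gs ! j) = (\<Sum>j<length gs. if j = i then gs ! j else 0)"
    by (intro sum.cong) auto
  then show "gs ! i = (\<Sum>j<length gs. (if j = i then 1 else 0) * gs ! j)"
    using assms by simp
qed auto

lemma zero_set_gen_ideal:
  "a \<in> zero_set n (gen_ideal n gs) \<longleftrightarrow> a \<in> points n \<and> (\<forall>i<length gs. eval_mpoly a (gs ! i) = 0)"
  unfolding zero_set_def using nth_mem_gen_ideal[of _ gs n] by (auto simp: gen_ideal_iff)

text \<open>Rabinowitsch's trick: as \<open>p\<close> vanishes on the zeros of \<open>I\<close>, the ideal \<open>I + (1 - X\<^sub>n p)\<close>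
  has no zero at all.\<close>
lemma rabinowitsch_unit:
  fixes gs :: "'a::idom mpoly list"
  assumes AC: "alg_closed_field TYPE('a)"
    and gs: "set gs \<subseteq> polys n" and p: "p \<in> polys n"
    and van: "\<forall>a\<in>zero_set n (gen_ideal n gs). eval_mpoly a p = 0"
  shows "1 \<in> gen_ideal (Suc n) (gs @ [1 - Var n * p])"
proof (rule ccontr)
  define hs where "hs = gs @ [1 - Var n * p]"
  have "set hs \<subseteq> polys (Suc n)"
    unfolding hs_def using gs p polys_Suc
    by (auto intro!: polys_diff polys_mult polys_Var)
  moreover assume "1 \<notin> gen_ideal (Suc n) (gs @ [1 - Var n * p])"
  ultimately obtain a where a: "a \<in> points (Suc n)" "\<forall>q\<in>gen_ideal (Suc n) hs. eval_mpoly a q = 0"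
    using weak_nullstellensatz[OF AC is_ideal_gen_ideal] unfolding hs_def by blast
  have hs_zero: "eval_mpoly a (hs ! i) = 0" if "i < length hs" for i
    using a(2) nth_mem_gen_ideal[OF that] by blast
  have "eval_mpoly (a(n := 0)) (gs ! i) = eval_mpoly a (gs ! i)" if "i < length gs" for i
    using gs that by (intro eval_mpoly_cong[of _ n]) auto
  moreover have "gs ! i = hs ! i" if "i < length gs" for i
    using that unfolding hs_def by (simp add: nth_append)
  ultimately have "a(n := 0) \<in> zero_set n (gen_ideal n gs)"
    using a(1) hs_zero unfolding zero_set_gen_ideal hs_def by (auto simp: points_def)
  then have "eval_mpoly a p = 0"
    using van eval_mpoly_cong[OF p, of "a(n := 0)" a] by simp
  moreover have "eval_mpoly a (1 - Var n * p) = 0"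
    using hs_zero[of "length gs"] unfolding hs_def by simp
  ultimately show False
    by simp
qed

lemma power_mult_mod_one_minus:
  fixes p c :: "'a::comm_ring_1 mpoly"
  assumes c: "c \<in> polys (Suc n)" "degree (to_univ n c) \<le> N" and p: "p \<in> polys n"
  shows "\<exists>c'\<in>polys n. \<exists>S. p ^ N * c = c' - (1 - Var n * p) * S"
proof -
  define co where "co = coeff (to_univ n c)"
  define G where "G = (\<lambda>k. \<Sum>j<k. (Var n * p) ^ j)"
  have "p ^ N * c = (\<Sum>k\<le>N. co k * (p ^ N * Var n ^ k))"
    by (subst polys_Suc_expansion[OF c]) (simp add: co_def sum_distrib_left mult_ac)
  also have "\<dots> = (\<Sum>k\<le>N. co k * p ^ (N - k) * (Var n * p) ^ k)"
  proof (intro sum.cong refl)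
    fix k assume "k \<in> {..N}"
    then have "p ^ N = p ^ (N - k) * p ^ k"
      by (simp add: power_add[symmetric])
    then show "co k * (p ^ N * Var n ^ k) = co k * p ^ (N - k) * (Var n * p) ^ k"
      by (simp add: power_mult_distrib mult_ac)
  qed
  also have "\<dots> = (\<Sum>k\<le>N. co k * p ^ (N - k) * (1 - (1 - Var n * p) * G k))"
    unfolding G_def by (intro sum.cong refl) (simp add: one_diff_power_eq[symmetric])
  also have "\<dots> = (\<Sum>k\<le>N. co k * p ^ (N - k)) - (1 - Var n * p) * (\<Sum>k\<le>N. co k * p ^ (N - k) * G k)"
    by (simp add: algebra_simps sum_subtractf sum_distrib_left sum.distrib)
  finally have "p ^ N * c = (\<Sum>k\<le>N. co k * p ^ (N - k)) - (1 - Var n * p) * (\<Sum>k\<le>N. co k * p ^ (N - k) * G k)" .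
  moreover have "(\<Sum>k\<le>N. co k * p ^ (N - k)) \<in> polys n"
    using coeff_to_univ_polys[OF c(1)] p unfolding co_def by (auto intro!: polys_sum polys_mult polys_power)
  ultimately show ?thesis
    by blast
qed

lemma polys_eq_mult_one_minus:
  fixes p r :: "'a::idom mpoly"
  assumes "r \<in> polys n" "p \<in> polys n" "p \<noteq> 0" "r = (1 - Var n * p) * T"
  shows "r = 0"
proof -
  note hom = comm_ring_hom_to_univ[of n]
  have "to_univ n (1 - Var n * p) = [:1, - p:]"
    using to_univ_polys[OF assms(2)]
    by (simp add: comm_ring_hom.hom_diff[OF hom] comm_ring_hom.hom_mult[OF hom] comm_ring_hom.hom_one[OF hom] one_pCons)
  then have "[:r:] = [:1, - p:] * to_univ n T"
    using to_univ_polys[OF assms(1)] comm_ring_hom.hom_mult[OF hom, of "1 - Var n * p" T] assms(4) by simp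
  moreover have "to_univ n T = 0"
  proof (rule ccontr)
    assume "to_univ n T \<noteq> 0"
    then have "degree ([:1, - p:] * to_univ n T) = 1 + degree (to_univ n T)"
      using assms(3) by (subst degree_mult_eq) auto
    then show False
      using \<open>[:r:] = [:1, - p:] * to_univ n T\<close> by (metis degree_pCons_0 add_is_0 one_neq_zero)
  qed
  ultimately show "r = 0"
    by simp
qed

theorem strong_nullstellensatz:
  fixes gs :: "'a::idom mpoly list"
  assumes AC: "alg_closed_field TYPE('a)"
    and gs: "set gs \<subseteq> polys n" and p: "p \<in> polys n"
    and van: "\<forall>a\<in>zero_set n (gen_ideal n gs). eval_mpoly a p = 0"
  shows "\<exists>k. p ^ k \<in> gen_ideal n gs"
proof (cases "p = 0")
  case True
  then show ?thesis
    using is_ideal_0[OF is_ideal_gen_ideal[OF gs]] by (intro exI[of _ 1]) simp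
next
  case p0: False
  define L where "L = length gs"
  define z where "z = 1 - Var n * p"
  obtain c where c: "\<forall>i<Suc L. c i \<in> polys (Suc n)" "1 = (\<Sum>i<Suc L. c i * (gs @ [z]) ! i)"
    using rabinowitsch_unit[OF AC gs p van] unfolding gen_ideal_iff z_def L_def by auto
  have one: "1 = (\<Sum>i<L. c i * gs ! i) + c L * z"
    using c(2) unfolding L_def by (simp add: nth_append)
  define N where "N = (\<Sum>i<L. degree (to_univ n (c i)))"
  have "\<forall>i<L. \<exists>c'\<in>polys n. \<exists>S. p ^ N * c i = c' - z * S"
  proof (intro allI impI)
    fix i assume "i < L"
    then have "degree (to_univ n (c i)) \<le> N"
      unfolding N_def by (intro member_le_sum) auto
    then show "\<exists>c'\<in>polys n. \<exists>S. p ^ N * c i = c' - z * S"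
      unfolding z_def using c(1) \<open>i < L\<close> by (intro power_mult_mod_one_minus[OF _ _ p]) auto
  qed
  then obtain c' S where cS: "\<And>i. i < L \<Longrightarrow> c' i \<in> polys n" "\<And>i. i < L \<Longrightarrow> p ^ N * c i = c' i - z * S i"
    by metis
  define T where "T = p ^ N * c L - (\<Sum>i<L. S i * gs ! i)"
  have "p ^ N = (\<Sum>i<L. (p ^ N * c i) * gs ! i) + p ^ N * c L * z"
    by (subst mult_1_right[symmetric], subst one) (simp add: algebra_simps sum_distrib_left)
  also have "\<dots> = (\<Sum>i<L. (c' i - z * S i) * gs ! i) + p ^ N * c L * z"
    using cS(2) by simp
  also have "\<dots> = (\<Sum>i<L. c' i * gs ! i) + z * T"
    unfolding T_def by (simp add: algebra_simps sum_subtractf sum_distrib_left)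
  finally have "p ^ N - (\<Sum>i<L. c' i * gs ! i) = (1 - Var n * p) * T"
    unfolding z_def by simp
  moreover have "p ^ N - (\<Sum>i<L. c' i * gs ! i) \<in> polys n"
    using cS(1) gs unfolding L_def by (auto intro!: polys_diff polys_power p polys_sum polys_mult)
  ultimately have "p ^ N = (\<Sum>i<L. c' i * gs ! i)"
    using polys_eq_mult_one_minus[OF _ p p0] by fastforce
  then show ?thesis
    using cS(1) unfolding gen_ideal_iff L_def by blast
qed


lemma quotient_is_domain_power_mem:
  assumes J: "is_ideal n J" and D: "quotient_is_domain n J" and p: "p \<in> polys n"
  shows "p ^ k \<in> J \<Longrightarrow> p \<in> J"
proof (induction k)
  case 0
  then have "q \<in> J" if "q \<in> polys n" for q
    using is_ideal_mult[OF J that, of 1] by simp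
  then have "J = polys n"
    using is_ideal_subset[OF J] by blast
  then show ?case
    using D unfolding quotient_is_domain_def by blast
next
  case (Suc k)
  then show ?case
    using D p polys_power[OF p, of k] unfolding quotient_is_domain_def by auto
qed

lemma radical_subset_T_radical: "radical n I \<subseteq> T_radical n I"
  unfolding radical_def T_radical_def using quotient_is_domain_power_mem by blast

lemma radical_subset_vanishing_ideal:
  fixes I :: "'a::idom mpoly set"
  shows "radical n I \<subseteq> vanishing_ideal n (zero_set n I)"
proof
  fix p assume "p \<in> radical n I"
  then obtain k where k: "p \<in> polys n" "p ^ k \<in> I"
    unfolding radical_def by blast
  have "eval_mpoly a p = 0" if "a \<in> zero_set n I" for a
  proof -
    have "eval_mpoly a p ^ k = 0"
      using that k(2) unfolding zero_set_def by auto
    then show ?thesis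
      by (cases k) auto
  qed
  then show "p \<in> vanishing_ideal n (zero_set n I)"
    using k(1) unfolding vanishing_ideal_def by blast
qed

text \<open>The kernel of evaluation at a point is a prime ideal meeting \<open>A\<close> only in \<open>0\<close>.\<close>
lemma T_radical_subset_vanishing_ideal:
  fixes I :: "'a::idom mpoly set"
  assumes I: "I \<subseteq> polys n"
  shows "T_radical n I \<subseteq> vanishing_ideal n (zero_set n I)"
proof
  fix p assume p: "p \<in> T_radical n I"
  have "eval_mpoly a p = 0" if a: "a \<in> zero_set n I" for a
  proof -
    define J where "J = {q \<in> polys n. eval_mpoly a q = 0}"
    have "is_ideal n J"
      unfolding J_def is_ideal_def by (auto intro: polys_diff polys_mult)
    moreover have "I \<subseteq> J"
      using I a unfolding J_def zero_set_def by auto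
    moreover have "quotient_is_domain n J"
    proof -
      have "1 \<notin> J"
        unfolding J_def by simp
      then have "J \<noteq> polys n"
        using polys_one[of n] by blast
      then show ?thesis
        unfolding quotient_is_domain_def J_def by auto
    qed
    moreover have "\<forall>c. const_poly c \<in> J \<longrightarrow> c = 0"
      unfolding J_def by auto
    ultimately have "p \<in> J"
      using p unfolding T_radical_def by blast
    then show ?thesis
      unfolding J_def by blast
  qed
  then show "p \<in> vanishing_ideal n (zero_set n I)"
    using p unfolding vanishing_ideal_def T_radical_def by blast
qed

lemma vanishing_ideal_zero_set_eq_radical:
  fixes I :: "'a::idom mpoly set"
  assumes AC: "alg_closed_field TYPE('a)" and I: "fin_gen_ideal n I"
  shows "vanishing_ideal n (zero_set n I) = radical n I"
proof
  obtain gs where gs: "set gs \<subseteq> polys n" "I = gen_ideal n gs"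
    using I unfolding fin_gen_ideal_def by blast
  show "vanishing_ideal n (zero_set n I) \<subseteq> radical n I"
    using strong_nullstellensatz[OF AC gs(1)] gs(2) unfolding vanishing_ideal_def radical_def by blast
qed (rule radical_subset_vanishing_ideal)

section \<open>Failure over fields that are not algebraically closed\<close>

lemma rootless_poly_if_not_alg_closed:
  assumes "\<not> alg_closed_field TYPE('a::idom)"
  shows "\<exists>q::'a poly. degree q > 0 \<and> (\<forall>x. poly q x \<noteq> 0)"
proof (cases "\<forall>x::'a. x \<noteq> 0 \<longrightarrow> (\<exists>y. x * y = 1)")
  case True
  then show ?thesis
    using assms unfolding alg_closed_field_def by blast
next
  case False
  then obtain x :: 'a where x: "x \<noteq> 0" "\<forall>y. x * y \<noteq> 1"
    by blast
  have "poly [:-1, x:] y \<noteq> 0" for y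
    using x(2)[rule_format, of y] by (simp add: algebra_simps)
  then show ?thesis
    using x(1) by (intro exI[of _ "[:-1, x:]"]) simp
qed

lemma field_poly_prime_elem_divisor:
  fixes p :: "'a::field poly"
  assumes "degree p > 0"
  shows "\<exists>r. r dvd p \<and> prime_elem r"
proof -
  obtain r where r: "r dvd p" "degree r > 0"
    and least: "\<And>s. s dvd p \<Longrightarrow> degree s > 0 \<Longrightarrow> degree r \<le> degree s"
    using ex_has_least_nat[of "\<lambda>s. s dvd p \<and> degree s > 0" p degree] assms by auto
  have "irreducible r"
  proof (rule irreducibleI)
    show "r \<noteq> 0"
      using r(2) by auto
    then show "\<not> r dvd 1"
      using r(2) is_unit_iff_degree[of r] by simp
    fix a b assume ab: "r = a * b"
    show "a dvd 1 \<or> b dvd 1"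
    proof (rule ccontr)
      assume "\<not> (a dvd 1 \<or> b dvd 1)"
      moreover have "a \<noteq> 0" "b \<noteq> 0"
        using ab \<open>r \<noteq> 0\<close> by auto
      ultimately have "degree a > 0" "degree b > 0"
        using is_unit_iff_degree by auto
      moreover have "degree r = degree a + degree b"
        using ab \<open>a \<noteq> 0\<close> \<open>b \<noteq> 0\<close> by (simp add: degree_mult_eq)
      moreover have "a dvd p"
        using ab r(1) by (metis dvd_mult_left)
      ultimately show False
        using least by (metis add_le_same_cancel1 not_le)
    qed
  qed
  then show ?thesis
    using r(1) field_poly_irreducible_imp_prime by blast
qed

text \<open>Every variable is sent to \<open>X\<close>; this embeds \<open>A[X\<^sub>0]\<close> into \<open>Frac(A)[X]\<close>.\<close>
definition fract_univ :: "'a::idom mpoly \<Rightarrow> 'a fract poly" where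
  "fract_univ = eval_hom (\<lambda>c. [:to_fract c:]) (\<lambda>i. [:0, 1:])"

lemma comm_ring_hom_const_fract_poly: "comm_ring_hom (\<lambda>c. [:to_fract c:])"
  using comm_ring_hom_comp[OF comm_ring_hom_to_fract comm_ring_hom_const_poly_1] .

lemma comm_ring_hom_fract_univ: "comm_ring_hom fract_univ"
  unfolding fract_univ_def by (rule comm_ring_hom.comm_ring_hom_eval_hom[OF comm_ring_hom_const_fract_poly])

lemma fract_univ_const [simp]: "fract_univ (const_poly c) = [:to_fract c:]"
  unfolding fract_univ_def by (simp add: comm_ring_hom.eval_hom_const[OF comm_ring_hom_const_fract_poly])

lemma fract_univ_of_univ: "fract_univ (of_univ 0 q) = fract_poly q"
proof -
  have "fract_univ (of_univ 0 q) = poly (map_poly fract_univ (map_poly const_poly q)) (fract_univ (Var 0))"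
    unfolding of_univ_def by (rule comm_ring_hom.hom_poly[OF comm_ring_hom_fract_univ])
  also have "fract_univ (Var 0) = [:0, 1:]"
    unfolding fract_univ_def by (simp add: comm_ring_hom.eval_hom_Var[OF comm_ring_hom_const_fract_poly])
  also have "map_poly fract_univ (map_poly const_poly q) = map_poly (\<lambda>c. [:c:]) (fract_poly q)"
    by (simp add: map_poly_map_poly comm_ring_hom.hom_zero[OF comm_ring_hom_fract_univ] o_def)
  finally show ?thesis
    by (simp add: poly_map_const_poly_X)
qed

text \<open>The multiples of a prime \<open>r\<close> of \<open>Frac(A)[X]\<close> form a prime ideal of \<open>A[X\<^sub>0]\<close> containing
  no nonzero constant, since those are units of \<open>Frac(A)[X]\<close>.\<close>
lemma prime_ideal_multiples:
  fixes r :: "'a::idom fract poly"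
  assumes r: "prime_elem r"
  defines "J \<equiv> {g \<in> polys 1. r dvd fract_univ g}"
  shows "is_ideal 1 J" "quotient_is_domain 1 J" "1 \<notin> J" "const_poly c \<in> J \<Longrightarrow> c = 0"
proof -
  note hom = comm_ring_hom_fract_univ
  have r_nonunit: "\<not> r dvd 1"
    using r by (simp add: prime_elem_not_unit)
  show "is_ideal 1 J"
    unfolding J_def is_ideal_def
    by (auto simp: comm_ring_hom.hom_zero[OF hom] comm_ring_hom.hom_diff[OF hom] comm_ring_hom.hom_mult[OF hom]
        intro: polys_diff polys_mult)
  show "1 \<notin> J"
    unfolding J_def using r_nonunit by (simp add: comm_ring_hom.hom_one[OF hom])
  show "quotient_is_domain 1 J"
    unfolding quotient_is_domain_def
  proof (intro conjI ballI impI)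
    show "J \<noteq> polys 1"
      using \<open>1 \<notin> J\<close> polys_one by blast
  next
    fix a b assume "a \<in> polys 1" "b \<in> polys 1" "a * b \<in> J"
    then show "a \<in> J \<or> b \<in> J"
      unfolding J_def using r by (auto simp: comm_ring_hom.hom_mult[OF hom] prime_elem_dvd_mult_iff)
  qed
  show "c = 0" if "const_poly c \<in> J"
  proof (rule ccontr)
    assume "c \<noteq> 0"
    then have "is_unit [:to_fract c:]"
      by (simp add: is_unit_const_poly_iff dvd_field_iff)
    moreover have "r dvd [:to_fract c:]"
      using that unfolding J_def by simp
    ultimately show False
      using r_nonunit by (meson dvd_trans)
  qed
qed

lemma prime_ideal_containing_poly:
  fixes q :: "'a::idom poly"
  assumes q: "degree q > 0"
  shows "\<exists>J. is_ideal 1 J \<and> gen_ideal 1 [of_univ 0 q] \<subseteq> J \<and> quotient_is_domain 1 J \<and>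
             (\<forall>c. const_poly c \<in> J \<longrightarrow> c = 0) \<and> 1 \<notin> J"
proof -
  have "degree (fract_poly q) = degree q"
    by (rule degree_map_poly) simp
  then have "\<exists>r. r dvd fract_poly q \<and> prime_elem r"
    using q by (intro field_poly_prime_elem_divisor) simp
  then obtain r where r: "r dvd fract_poly q" "prime_elem r"
    by blast
  have "gen_ideal 1 [of_univ 0 q] \<subseteq> {g \<in> polys 1. r dvd fract_univ g}"
  proof
    fix g assume "g \<in> gen_ideal 1 [of_univ 0 q]"
    then obtain c where c: "c 0 \<in> polys 1" "g = c 0 * of_univ 0 q"
      unfolding gen_ideal_iff by auto
    then have "fract_univ g = fract_univ (c 0) * fract_poly q"
      by (simp add: comm_ring_hom.hom_mult[OF comm_ring_hom_fract_univ] fract_univ_of_univ)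
    then show "g \<in> {g \<in> polys 1. r dvd fract_univ g}"
      using r(1) c of_univ_polys[of 0 q] by (auto intro: polys_mult)
  qed
  then show ?thesis
    using prime_ideal_multiples[OF r(2)] by blast
qed

lemma nullstellensatz_fails:
  fixes q :: "'a::idom poly"
  assumes q: "degree q > 0" "\<forall>x. poly q x \<noteq> 0"
  defines "I \<equiv> gen_ideal 1 [of_univ 0 q]"
  shows "fin_gen_ideal 1 I" "1 \<in> vanishing_ideal 1 (zero_set 1 I)" "1 \<notin> T_radical 1 I"
proof -
  show "fin_gen_ideal 1 I"
    unfolding I_def fin_gen_ideal_def using of_univ_polys[of 0 q]
    by (intro exI[of _ "[of_univ 0 q]"]) auto
  have "zero_set 1 I = {}"
  proof (rule ccontr)
    assume "zero_set 1 I \<noteq> {}"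
    then obtain a where "a \<in> zero_set 1 I"
      by blast
    then have "eval_mpoly a (of_univ 0 q) = 0"
      unfolding I_def zero_set_gen_ideal by simp
    moreover have "eval_mpoly a (of_univ 0 q) = poly q (a 0)"
      using poly_partial_eval[OF of_univ_polys[of 0 q], of a "a 0"] by (simp add: partial_eval_of_univ)
    ultimately show False
      using q(2) by simp
  qed
  then show "1 \<in> vanishing_ideal 1 (zero_set 1 I)"
    by (simp add: vanishing_ideal_def)
  show "1 \<notin> T_radical 1 I"
    using prime_ideal_containing_poly[OF q(1)] unfolding T_radical_def I_def by blast
qed

theorem theorem4p1:
  shows "(alg_closed_field TYPE('a::idom) \<longleftrightarrow>
           (\<forall>n. \<forall>I::'a mpoly set. fin_gen_ideal n I \<longrightarrow>
               vanishing_ideal n (zero_set n I) = radical n I)) \<and>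
         (alg_closed_field TYPE('a) \<longleftrightarrow>
           (\<forall>n. \<forall>I::'a mpoly set. fin_gen_ideal n I \<longrightarrow>
               vanishing_ideal n (zero_set n I) = T_radical n I))"
proof (cases "alg_closed_field TYPE('a)")
  case True
  have "vanishing_ideal n (zero_set n I) = T_radical n I" if "fin_gen_ideal n I" for n and I :: "'a mpoly set"
    using vanishing_ideal_zero_set_eq_radical[OF True that] radical_subset_T_radical[of n I]
      T_radical_subset_vanishing_ideal[of I n] that
    by (auto simp: fin_gen_ideal_def dest: is_ideal_gen_ideal[THEN is_ideal_subset])
  then show ?thesis
    using True vanishing_ideal_zero_set_eq_radical by blast
next
  case False
  then obtain q :: "'a poly" where q: "degree q > 0" "\<forall>x. poly q x \<noteq> 0"
    using rootless_poly_if_not_alg_closed by blast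
  have "radical 1 I \<subseteq> T_radical 1 I" for I :: "'a mpoly set"
    by (rule radical_subset_T_radical)
  then show ?thesis
    using False nullstellensatz_fails[OF q] by blast
qed

end
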